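(* Let $U_0$, $T(s)$, $A$, $U_l$, $\|\cdot\|_l$, $\varepsilon_0$, $u_0$, $F$, $\mathcal{F}$ be as in the context, satisfying (A1)–(A4). Then for every nonnegative integer $l$ there exists $c_l>0$ such that for all $\lambda\in[-\varepsilon_0,\varepsilon_0]$ and all $f\in U_l$ it holds $\partial_uF(\lambda,u_0)^{-1}f\in U_l$ and $\|\partial_uF(\lambda,u_0)^{-1}f\|_l\le c_l\|f\|_l$.
   Context: $U_0$ is a real Banach space with norm $\|\cdot\|_0$, $\{T(s)\}_{s\in\mathbb{R}}$ a strongly continuous group of bounded linear operators on $U_0$ with generator $A$, $U_l:=D(A^l)=\{u\in U_0: T(\cdot)u\in C^l(\mathbb{R};U_0)\}$ with norm $\|u\|_l:=\sum_{k=0}^l\|A^ku\|_0$. $\varepsilon_0>0$, $u_0\in U_0$, $F:[-\varepsilon_0,\varepsilon_0]\times U_0\to U_0$ with $F(0,u_0)=0$, and $\mathcal{F}(\lambda,s,u):=T(s)F(\lambda,T(-s)u)$. Assumptions: (A1) for every $\lambda$, $(s,u)\mapsto\mathcal{F}(\lambda,s,u)$ is in $C^\infty(\mathbb{R}\times U_0;U_0)$, with partial derivatives $\partial_s^k\partial_u^j\mathcal{F}$; $\partial_u^jF(\lambda,u):=\partial_u^j\mathcal{F}(\lambda,0,u)$. (A2) for all $j,k,l\ge0$ and $u,u_1,\dots,u_j\in U_l$, $\lambda\mapsto\partial_s^k\partial_u^j\mathcal{F}(\lambda,0,u)(u_1,\dots,u_j)$ is in $C^l([-\varepsilon_0,\varepsilon_0];U_0)$;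 its $l$-th derivative is written $\partial_\lambda^l\partial_s^k\partial_u^j\mathcal{F}(\lambda,0,u)(u_1,\dots,u_j)$. (A3) for all $j,k,l\ge0$ there is $c_{jkl}>0$ with $\|\partial_\lambda^l\partial_s^k\partial_u^j\mathcal{F}(\lambda,0,u)(u_1,\dots,u_j)\|_0\le c_{jkl}\|u_1\|_l\cdots\|u_j\|_l$ for all $\lambda\in[-\varepsilon_0,\varepsilon_0]$, $u,u_i\in U_l$, $\|u-u_0\|_l\le1$. (A4) there is $c_0>0$ such that for all $\lambda\in[-\varepsilon_0,\varepsilon_0]$, $\partial_uF(\lambda,u_0)$ is Fredholm of index zero $U_0\to U_0$ and $\|\partial_uF(\lambda,u_0)u\|_0\ge c_0\|u\|_0$ for all $u\in U_0$ (so $\partial_uF(\lambda,u_0)$ is invertible on $U_0$). *)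

theory Defs
  imports "HOL-Analysis.Analysis"
begin

definition sc_group :: "(real \<Rightarrow> 'a::banach \<Rightarrow> 'a) \<Rightarrow> bool" where
  "sc_group T \<longleftrightarrow> (\<forall>s. bounded_linear (T s)) \<and> T 0 = id \<and>
     (\<forall>s t. T (s + t) = T s \<circ> T t) \<and> (\<forall>u. continuous_on UNIV (\<lambda>s. T s u))"

text \<open>Generator A u = d/ds T(s)u at s = 0 (meaningful on D(A)).\<close>
definition gen :: "(real \<Rightarrow> 'a::banach \<Rightarrow> 'a) \<Rightarrow> 'a \<Rightarrow> 'a" where
  "gen T u = vector_derivative (\<lambda>s. T s u) (at 0)"

text \<open>U_l = D(A^l).\<close>
fun Ul :: "(real \<Rightarrow> 'a::banach \<Rightarrow> 'a) \<Rightarrow> nat \<Rightarrow> 'a set" where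
  "Ul T 0 = UNIV"
| "Ul T (Suc l) = {u \<in> Ul T l. (\<lambda>s. T s ((gen T ^^ l) u)) differentiable (at 0)}"

definition norm_l :: "(real \<Rightarrow> 'a::banach \<Rightarrow> 'a) \<Rightarrow> nat \<Rightarrow> 'a \<Rightarrow> real" where
  "norm_l T l u = (\<Sum>k\<le>l. norm ((gen T ^^ k) u))"

definition mlin_bounded :: "nat \<Rightarrow> ('v::real_normed_vector list \<Rightarrow> 'w::real_normed_vector) \<Rightarrow> bool" where
  "mlin_bounded n M \<longleftrightarrow>
     (\<forall>i<n. \<forall>hs x y c. length hs = n \<longrightarrow>
        M (hs[i := x + y]) = M (hs[i := x]) + M (hs[i := y]) \<and>
        M (hs[i := c *\<^sub>R x]) = c *\<^sub>R M (hs[i := x])) \<and>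
     (\<exists>K. \<forall>hs. length hs = n \<longrightarrow> norm (M hs) \<le> K * (\<Prod>h\<leftarrow>hs. norm h))"

text \<open>D is the tower of Frechet derivatives of f (D n x is the n-th derivative at x,
  a bounded n-linear map) and each D n is Frechet differentiable with derivative
  D (Suc n), the remainder being small in operator norm.\<close>
definition Cinf_tower :: "('v::real_normed_vector \<Rightarrow> 'w::real_normed_vector) \<Rightarrow>
     (nat \<Rightarrow> 'v \<Rightarrow> 'v list \<Rightarrow> 'w) \<Rightarrow> bool" where
  "Cinf_tower f D \<longleftrightarrow>
     (\<forall>x. D 0 x [] = f x) \<and>
     (\<forall>n x. mlin_bounded n (D n x)) \<and>
     (\<forall>n x e. e > 0 \<longrightarrow> (\<exists>d>0. \<forall>y. norm (y - x) < d \<longrightarrow>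
        (\<forall>hs. length hs = n \<longrightarrow>
           norm (D n y hs - D n x hs - D (Suc n) x ((y - x) # hs))
             \<le> e * norm (y - x) * (\<Prod>h\<leftarrow>hs. norm h))))"

definition Cinf :: "('v::real_normed_vector \<Rightarrow> 'w::real_normed_vector) \<Rightarrow> bool" where
  "Cinf f \<longleftrightarrow> (\<exists>D. Cinf_tower f D)"

text \<open>Partial derivative d_s^k d_u^j of a map on R x U0, read off from the full derivative:
  pd D k j (s,u) us = D^(k+j)(s,u)[(1,0)^k, (0,u_1), ..., (0,u_j)].\<close>
definition pd :: "(nat \<Rightarrow> real \<times> 'a \<Rightarrow> (real \<times> 'a) list \<Rightarrow> 'b) \<Rightarrow> nat \<Rightarrow> nat \<Rightarrow>
     real \<Rightarrow> 'a::real_normed_vector \<Rightarrow> 'a list \<Rightarrow> 'b" where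
  "pd D k j s u us = D (k + j) (s, u) (replicate k (1, 0) @ map (\<lambda>v. (0, v)) us)"

fun Ck_on :: "real set \<Rightarrow> nat \<Rightarrow> (real \<Rightarrow> 'a::real_normed_vector) \<Rightarrow> bool" where
  "Ck_on S 0 g = continuous_on S g"
| "Ck_on S (Suc l) g =
     ((\<forall>t\<in>S. (g has_vector_derivative vector_derivative g (at t within S)) (at t within S)) \<and>
      Ck_on S l (\<lambda>t. vector_derivative g (at t within S)))"

definition lderiv :: "real set \<Rightarrow> nat \<Rightarrow> (real \<Rightarrow> 'a::real_normed_vector) \<Rightarrow> real \<Rightarrow> 'a" where
  "lderiv S l g = ((\<lambda>h t. vector_derivative h (at t within S)) ^^ l) g"

definition fredholm_index0 :: "('a::real_normed_vector \<Rightarrow> 'a) \<Rightarrow> bool" where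
  "fredholm_index0 L \<longleftrightarrow> bounded_linear L \<and> closed (range L) \<and>
     (\<exists>B C. finite B \<and> independent B \<and> span B = {x. L x = 0} \<and>
            finite C \<and> independent C \<and> card C = card B \<and>
            range L \<inter> span C = {0} \<and>
            {x + y |x y. x \<in> range L \<and> y \<in> span C} = UNIV)"

end

theory Submission
  imports Defs
begin

(*
  The linearization L = \<partial>_u F(\<lambda>, u0) is bounded below and Fredholm of index zero, hence
  invertible on U_0 with |L^-1| <= 1/c0. Higher regularity is bootstrapped along the orbit of the
  group: the map (s, u) |-> T(s) F(\<lambda>, T(-s) u) is equivariant, so its derivatives at
  (s, T(s) u0) are the T(s)-translates of those at (0, u0). Differentiating this in s at s = 0
  shows that A u0 = -L^-1 \<partial>_s F(u0) (at \<lambda> = 0, where F(0, u0) = 0), that A applied to a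
  derivative of F at u0 is a sum of derivatives of one order higher, and that L u = f implies
  L (A u) = A f - \<partial>_s \<partial>_u F(u0) u - \<partial>_u^2 F(u0)(A u0, u). By induction on l, u0 lies in
  every U_l and all derivatives of F at u0, as well as L^-1, are bounded on U_l uniformly in
  \<lambda>; the case l = 0 is (A3). Differentiating in s relies on the symmetry of higher Frechet
  derivatives (Schwarz).
*)

lemma has_vector_derivative_iff_quotient:
  fixes f :: "real \<Rightarrow> 'b::real_normed_vector"
  shows "(f has_vector_derivative D) (at x within S) \<longleftrightarrow>
    ((\<lambda>y. (f y - f x) /\<^sub>R (y - x)) \<longlongrightarrow> D) (at x within S)"
proof -
  have "norm (f y - f x - (y - x) *\<^sub>R D) / norm (y - x) = norm ((f y - f x) /\<^sub>R (y - x) - D)"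
    if "y \<noteq> x" for y
  proof -
    have "f y - f x - (y - x) *\<^sub>R D = (y - x) *\<^sub>R ((f y - f x) /\<^sub>R (y - x) - D)"
      using that by (simp add: scaleR_right_diff_distrib)
    then show ?thesis using that by simp
  qed
  then have "((\<lambda>y. norm (f y - f x - (y - x) *\<^sub>R D) / norm (y - x)) \<longlongrightarrow> 0) (at x within S)
      \<longleftrightarrow> ((\<lambda>y. norm ((f y - f x) /\<^sub>R (y - x) - D)) \<longlongrightarrow> 0) (at x within S)"
    by (intro filterlim_cong) (auto simp: eventually_at_filter)
  then show ?thesis
    by (simp add: has_vector_derivative_def has_derivative_iff_norm bounded_linear_scaleR_left
        tendsto_norm_zero_iff LIM_zero_iff)
qed

lemma norm_diff_le_of_vector_derivative_bound:
  fixes \<phi> :: "real \<Rightarrow> 'b::real_normed_vector"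
  assumes "\<And>\<tau>. \<tau> \<in> {a..b} \<Longrightarrow> (\<phi> has_vector_derivative \<phi>' \<tau>) (at \<tau>)"
    and "\<And>\<tau>. \<tau> \<in> {a..b} \<Longrightarrow> norm (\<phi>' \<tau>) \<le> B" and "a \<le> b"
  shows "norm (\<phi> b - \<phi> a) \<le> B * (b - a)"
proof -
  have "norm (\<phi> b - \<phi> a) \<le> B * norm (b - a)"
  proof (rule differentiable_bound[of "{a..b}" \<phi> "\<lambda>\<tau> h. h *\<^sub>R \<phi>' \<tau>"])
    fix \<tau> assume \<tau>: "\<tau> \<in> {a..b}"
    show "(\<phi> has_derivative (\<lambda>h. h *\<^sub>R \<phi>' \<tau>)) (at \<tau> within {a..b})"
      using assms(1)[OF \<tau>] unfolding has_vector_derivative_def by (rule has_derivative_at_withinI)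
    show "onorm (\<lambda>h. h *\<^sub>R \<phi>' \<tau>) \<le> B"
      using assms(2)[OF \<tau>] by (simp add: onorm_scaleR_left[OF bounded_linear_ident] onorm_id)
  qed (use assms(3) in auto)
  then show ?thesis using assms(3) by simp
qed

lemma prod_list_mono:
  fixes xs ys :: "'b::linordered_semidom list"
  assumes "list_all2 (\<lambda>x y. 0 \<le> x \<and> x \<le> y) xs ys"
  shows "prod_list xs \<le> prod_list ys"
  using assms
proof (induction rule: list_all2_induct)
  case (Cons x xs y ys)
  then have "0 \<le> prod_list xs"
    by (intro prod_list_nonneg) (auto simp: list_all2_conv_all_nth in_set_conv_nth)
  with Cons show ?case by (auto intro: mult_mono)
qed simp

lemma prod_list_norm_map_le:
  assumes "\<And>h. norm (g h) \<le> K * norm h" "K \<ge> 0"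
  shows "(\<Prod>h\<leftarrow>map g hs. norm h) \<le> K ^ length hs * (\<Prod>h\<leftarrow>hs. norm h)"
proof (induction hs)
  case (Cons h hs)
  have "0 \<le> (\<Prod>h\<leftarrow>map g hs. norm h)" by (rule prod_list_nonneg) auto
  then have "norm (g h) * (\<Prod>h\<leftarrow>map g hs. norm h) \<le> (K * norm h) * (K ^ length hs * (\<Prod>h\<leftarrow>hs. norm h))"
    by (intro mult_mono assms Cons.IH) (use assms(2) in auto)
  then show ?case by (simp add: ac_simps)
qed simp

lemma tendsto_prod_list_norm:
  fixes hs :: "'b \<Rightarrow> 'a::real_normed_vector list"
  assumes "\<And>s. length (hs s) = n" "length hs0 = n"
    and "\<And>i. i < n \<Longrightarrow> ((\<lambda>s. hs s ! i) \<longlongrightarrow> hs0 ! i) F"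
  shows "((\<lambda>s. \<Prod>h\<leftarrow>hs s. norm h) \<longlongrightarrow> (\<Prod>h\<leftarrow>hs0. norm h)) F"
proof -
  have "(\<Prod>h\<leftarrow>hs s. norm h) = (\<Prod>i<n. norm (hs s ! i))" for s
    using assms(1)[of s] by (simp add: prod.list_conv_set_nth atLeast0LessThan)
  moreover have "(\<Prod>h\<leftarrow>hs0. norm h) = (\<Prod>i<n. norm (hs0 ! i))"
    using assms(2) by (simp add: prod.list_conv_set_nth atLeast0LessThan)
  moreover have "((\<lambda>s. \<Prod>i<n. norm (hs s ! i)) \<longlongrightarrow> (\<Prod>i<n. norm (hs0 ! i))) F"
    using assms(3) by (intro tendsto_prod tendsto_norm) auto
  ultimately show ?thesis by simp
qed

lemma sum_lessThan_add:
  fixes f :: "nat \<Rightarrow> 'b::comm_monoid_add"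
  shows "(\<Sum>i<m + n. f i) = (\<Sum>i<m. f i) + (\<Sum>i<n. f (m + i))"
  by (induction n) (simp_all add: add.assoc)

lemma tendsto_absorbing_bound:
  fixes q :: "'b \<Rightarrow> 'a::real_normed_vector"
  assumes c: "c > 0"
    and ev: "\<forall>\<^sub>F h in F. c * norm (q h - z) \<le> g h + \<kappa> h * norm (q h - z)"
    and g: "(g \<longlongrightarrow> 0) F" and \<kappa>: "(\<kappa> \<longlongrightarrow> 0) F"
  shows "(q \<longlongrightarrow> z) F"
proof (rule LIM_zero_cancel, rule Lim_null_comparison)
  have "\<forall>\<^sub>F h in F. \<kappa> h < c / 2" using order_tendstoD(2)[OF \<kappa>, of "c / 2"] c by simp
  with ev show "\<forall>\<^sub>F h in F. norm (q h - z) \<le> 2 / c * g h"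
  proof eventually_elim
    case (elim h)
    then have "c / 2 * norm (q h - z) \<le> g h"
      using mult_right_mono[of "\<kappa> h" "c / 2" "norm (q h - z)"] by simp
    then show ?case using c by (simp add: field_simps)
  qed
  show "((\<lambda>h. 2 / c * g h) \<longlongrightarrow> 0) F"
    using tendsto_mult_right_zero[OF g] .
qed

section \<open>Bounded multilinear maps\<close>

lemma mlin_bounded_add:
  "mlin_bounded n M \<Longrightarrow> i < n \<Longrightarrow> length hs = n \<Longrightarrow>
    M (hs[i := x + y]) = M (hs[i := x]) + M (hs[i := y])"
  unfolding mlin_bounded_def by blast

lemma mlin_bounded_scale:
  "mlin_bounded n M \<Longrightarrow> i < n \<Longrightarrow> length hs = n \<Longrightarrow> M (hs[i := c *\<^sub>R x]) = c *\<^sub>R M (hs[i := x])"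
  unfolding mlin_bounded_def by blast

lemma mlin_bounded_normE:
  assumes "mlin_bounded n M"
  obtains K where "K \<ge> 0" "\<And>hs. length hs = n \<Longrightarrow> norm (M hs) \<le> K * (\<Prod>h\<leftarrow>hs. norm h)"
proof -
  obtain K where K: "\<And>hs. length hs = n \<Longrightarrow> norm (M hs) \<le> K * (\<Prod>h\<leftarrow>hs. norm h)"
    using assms unfolding mlin_bounded_def by blast
  have "K * (\<Prod>h\<leftarrow>hs. norm h) \<le> max K 0 * (\<Prod>h\<leftarrow>hs. norm h)" for hs :: "'a list"
    by (intro mult_right_mono prod_list_nonneg) auto
  with K show ?thesis by (intro that[of "max K 0"]) (auto intro: order_trans)
qed

lemma mlin_bounded_eq_0:
  assumes "mlin_bounded n M" "length hs = n" "i < n" "hs ! i = 0"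
  shows "M hs = 0"
proof -
  have "M hs = M (hs[i := 0 *\<^sub>R 0])"
    by (metis assms(4) list_update_id scale_zero_left)
  also have "\<dots> = 0"
    using mlin_bounded_scale[OF assms(1,3,2), of 0 0] by simp
  finally show ?thesis .
qed

lemma mlin_bounded_Cons:
  assumes "mlin_bounded (Suc n) M"
  shows "mlin_bounded n (\<lambda>t. M (h # t))"
proof -
  obtain K where K: "\<And>hs. length hs = Suc n \<Longrightarrow> norm (M hs) \<le> K * (\<Prod>h\<leftarrow>hs. norm h)"
    using mlin_bounded_normE[OF assms] by blast
  show ?thesis unfolding mlin_bounded_def
  proof (intro conjI allI impI exI)
    fix i hs x y c assume "i < n" "length (hs::'a list) = n"
    then show "M (h # hs[i := x + y]) = M (h # hs[i := x]) + M (h # hs[i := y])"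
      and "M (h # hs[i := c *\<^sub>R x]) = c *\<^sub>R M (h # hs[i := x])"
      using mlin_bounded_add[OF assms, of "Suc i" "h # hs"] mlin_bounded_scale[OF assms, of "Suc i" "h # hs"]
      by auto
  next
    fix hs :: "'a list" assume "length hs = n"
    then show "norm (M (h # hs)) \<le> K * norm h * (\<Prod>h\<leftarrow>hs. norm h)"
      using K[of "h # hs"] by (simp add: ac_simps)
  qed
qed

lemma bounded_linear_mlin_head:
  assumes "mlin_bounded (Suc n) M" "length t = n"
  shows "bounded_linear (\<lambda>h. M (h # t))"
proof -
  obtain K where K: "\<And>hs. length hs = Suc n \<Longrightarrow> norm (M hs) \<le> K * (\<Prod>h\<leftarrow>hs. norm h)"
    using mlin_bounded_normE[OF assms(1)] by blast
  show ?thesis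
  proof (rule bounded_linear_intro[where K = "K * (\<Prod>h\<leftarrow>t. norm h)"])
    show "M ((x + y) # t) = M (x # t) + M (y # t)" for x y
      using mlin_bounded_add[OF assms(1), of 0 "0 # t" x y] assms(2) by simp
    show "M ((r *\<^sub>R x) # t) = r *\<^sub>R M (x # t)" for r x
      using mlin_bounded_scale[OF assms(1), of 0 "0 # t" r x] assms(2) by simp
    show "norm (M (x # t)) \<le> norm x * (K * (\<Prod>h\<leftarrow>t. norm h))" for x
      using K[of "x # t"] assms(2) by (simp add: ac_simps)
  qed
qed

lemma tendsto_mlin_bounded:
  fixes hs :: "'b \<Rightarrow> 'a::real_normed_vector list"
  assumes "mlin_bounded n M" "\<And>s. length (hs s) = n" "length hs0 = n"
    and "\<And>i. i < n \<Longrightarrow> ((\<lambda>s. hs s ! i) \<longlongrightarrow> hs0 ! i) F"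
  shows "((\<lambda>s. M (hs s)) \<longlongrightarrow> M hs0) F"
  using assms
proof (induction n arbitrary: M hs hs0)
  case (Suc n)
  define a where "a s = hd (hs s)" for s
  define t where "t s = tl (hs s)" for s
  have hs: "hs s = a s # t s" for s
    using Suc.prems(2)[of s] unfolding a_def t_def by (cases "hs s") auto
  obtain a0 t0 where hs0: "hs0 = a0 # t0" using Suc.prems(3) by (cases hs0) auto
  have lt: "length (t s) = n" for s using Suc.prems(2)[of s] hs[of s] by simp
  have lt0: "length t0 = n" using Suc.prems(3) hs0 by simp
  have ta: "(a \<longlongrightarrow> a0) F" using Suc.prems(4)[of 0] hs hs0 by simp
  have tt: "((\<lambda>s. t s ! i) \<longlongrightarrow> t0 ! i) F" if "i < n" for i
    using Suc.prems(4)[of "Suc i"] hs hs0 that by simp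
  obtain K where K: "\<And>hs. length hs = Suc n \<Longrightarrow> norm (M hs) \<le> K * (\<Prod>h\<leftarrow>hs. norm h)"
    using mlin_bounded_normE[OF Suc.prems(1)] by blast
  have split: "M (a s # t s) = M ((a s - a0) # t s) + M (a0 # t s)" for s
    using linear_add[OF bounded_linear.linear[OF bounded_linear_mlin_head[OF Suc.prems(1) lt]]]
    by (metis diff_add_cancel)
  have t2: "((\<lambda>s. M (a0 # t s)) \<longlongrightarrow> M (a0 # t0)) F"
    by (rule Suc.IH[OF mlin_bounded_Cons[OF Suc.prems(1)] lt lt0 tt])
  have t1: "((\<lambda>s. M ((a s - a0) # t s)) \<longlongrightarrow> 0) F"
  proof (rule Lim_null_comparison)
    show "\<forall>\<^sub>F s in F. norm (M ((a s - a0) # t s)) \<le> K * (norm (a s - a0) * (\<Prod>h\<leftarrow>t s. norm h))"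
    proof (intro always_eventually allI)
      show "norm (M ((a s - a0) # t s)) \<le> K * (norm (a s - a0) * (\<Prod>h\<leftarrow>t s. norm h))" for s
        using K[of "(a s - a0) # t s"] lt[of s] by simp
    qed
    have "((\<lambda>s. K * (norm (a s - a0) * (\<Prod>h\<leftarrow>t s. norm h))) \<longlongrightarrow> K * (norm (a0 - a0) * (\<Prod>h\<leftarrow>t0. norm h))) F"
      by (intro tendsto_intros ta tendsto_prod_list_norm[OF lt lt0 tt])
    then show "((\<lambda>s. K * (norm (a s - a0) * (\<Prod>h\<leftarrow>t s. norm h))) \<longlongrightarrow> 0) F" by simp
  qed
  show ?case unfolding hs hs0 split
    using tendsto_add[OF t1 t2] by simp
qed simp

lemma has_vector_derivative_mlin_bounded:
  fixes hs :: "real \<Rightarrow> 'a::real_normed_vector list"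
  assumes "mlin_bounded n M" "\<And>s. length (hs s) = n" "length hs' = n"
    and "\<And>i. i < n \<Longrightarrow> ((\<lambda>s. hs s ! i) has_vector_derivative hs' ! i) (at x)"
  shows "((\<lambda>s. M (hs s)) has_vector_derivative (\<Sum>i<n. M ((hs x)[i := hs' ! i]))) (at x)"
  using assms
proof (induction n arbitrary: M hs hs')
  case (Suc n)
  define a where "a s = hd (hs s)" for s
  define t where "t s = tl (hs s)" for s
  have hs: "hs s = a s # t s" for s
    using Suc.prems(2)[of s] unfolding a_def t_def by (cases "hs s") auto
  obtain a' t' where hs': "hs' = a' # t'" using Suc.prems(3) by (cases hs') auto
  have lt: "length (t s) = n" for s using Suc.prems(2)[of s] hs[of s] by simp
  have lt': "length t' = n" using Suc.prems(3) hs' by simp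
  have da: "(a has_vector_derivative a') (at x)" using Suc.prems(4)[of 0] hs hs' by simp
  have dt: "((\<lambda>s. t s ! i) has_vector_derivative t' ! i) (at x)" if "i < n" for i
    using Suc.prems(4)[of "Suc i"] hs hs' that by simp
  have head: "linear (\<lambda>h. M (h # t s))" for s
    using bounded_linear.linear[OF bounded_linear_mlin_head[OF Suc.prems(1) lt]] .
  have split: "M (a s # t s) = M ((a s - a x) # t s) + M (a x # t s)" for s
    using linear_add[OF head] by (metis diff_add_cancel)
  have d2: "((\<lambda>s. M (a x # t s)) has_vector_derivative (\<Sum>i<n. M (a x # (t x)[i := t' ! i]))) (at x)"
    by (rule Suc.IH[OF mlin_bounded_Cons[OF Suc.prems(1)] lt lt' dt])
  have d1: "((\<lambda>s. M ((a s - a x) # t s)) has_vector_derivative M (a' # t x)) (at x)"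
    unfolding has_vector_derivative_iff_quotient
  proof -
    have "M ((a x - a x) # t x) = 0"
      using linear_0[OF head] by simp
    then have q: "(M ((a s - a x) # t s) - M ((a x - a x) # t x)) /\<^sub>R (s - x) =
        M (((a s - a x) /\<^sub>R (s - x)) # t s)" for s
      using linear_scale[OF head] by simp
    have "((\<lambda>s. M (((a s - a x) /\<^sub>R (s - x)) # t s)) \<longlongrightarrow> M (a' # t x)) (at x)"
    proof (rule tendsto_mlin_bounded[OF Suc.prems(1)])
      fix i assume "i < Suc n"
      show "((\<lambda>s. (((a s - a x) /\<^sub>R (s - x)) # t s) ! i) \<longlongrightarrow> (a' # t x) ! i) (at x)"
      proof (cases i)
        case 0
        then show ?thesis using da by (simp add: has_vector_derivative_iff_quotient)
      next
        case (Suc j)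
        with \<open>i < Suc n\<close> have "isCont (\<lambda>s. t s ! j) x"
          using has_vector_derivative_continuous[OF dt] by simp
        then show ?thesis using Suc by (simp add: isCont_def)
      qed
    qed (use lt in auto)
    then show "((\<lambda>s. (M ((a s - a x) # t s) - M ((a x - a x) # t x)) /\<^sub>R (s - x)) \<longlongrightarrow> M (a' # t x)) (at x)"
      unfolding q .
  qed
  have "(\<Sum>i<Suc n. M ((hs x)[i := hs' ! i])) = M (a' # t x) + (\<Sum>i<n. M (a x # (t x)[i := t' ! i]))"
    unfolding sum.lessThan_Suc_shift hs hs' by simp
  then show ?case unfolding hs split
    using has_vector_derivative_add[OF d1 d2] by simp
qed simp

section \<open>Towers of Frechet derivatives\<close>

context
  fixes f :: "'v::real_normed_vector \<Rightarrow> 'w::real_normed_vector" and D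
  assumes tw: "Cinf_tower f D"
begin

lemma tower_mlin: "mlin_bounded n (D n x)"
  using tw unfolding Cinf_tower_def by blast

lemma tower_0: "D 0 x [] = f x"
  using tw unfolding Cinf_tower_def by blast

lemma tower_remainder:
  assumes "e > 0"
  shows "\<exists>d>0. \<forall>y hs. norm (y - x) < d \<longrightarrow> length hs = n \<longrightarrow>
     norm (D n y hs - D n x hs - D (Suc n) x ((y - x) # hs)) \<le> e * norm (y - x) * (\<Prod>h\<leftarrow>hs. norm h)"
  using tw assms unfolding Cinf_tower_def by metis

lemma bounded_linear_tower_head: "length hs = n \<Longrightarrow> bounded_linear (\<lambda>h. D (Suc n) x (h # hs))"
  by (rule bounded_linear_mlin_head[OF tower_mlin])

lemma tower_head_add:
  "length hs = n \<Longrightarrow> D (Suc n) x ((a + b) # hs) = D (Suc n) x (a # hs) + D (Suc n) x (b # hs)"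
  by (rule linear_add[OF bounded_linear.linear[OF bounded_linear_tower_head]])

lemma tower_head_diff:
  "length hs = n \<Longrightarrow> D (Suc n) x ((a - b) # hs) = D (Suc n) x (a # hs) - D (Suc n) x (b # hs)"
  by (rule linear_diff[OF bounded_linear.linear[OF bounded_linear_tower_head]])

lemma tower_head_scale:
  "length hs = n \<Longrightarrow> D (Suc n) x ((c *\<^sub>R a) # hs) = c *\<^sub>R D (Suc n) x (a # hs)"
  by (rule linear_scale[OF bounded_linear.linear[OF bounded_linear_tower_head]])

lemma has_derivative_tower:
  assumes "length hs = n"
  shows "((\<lambda>y. D n y hs) has_derivative (\<lambda>h. D (Suc n) x (h # hs))) (at x)"
  unfolding has_derivative_at_alt
proof (intro conjI allI impI)
  show "bounded_linear (\<lambda>h. D (Suc n) x (h # hs))" by (rule bounded_linear_tower_head[OF assms])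
next
  fix e :: real assume "e > 0"
  define P where "P = (\<Prod>h\<leftarrow>hs. norm h)"
  have P0: "P \<ge> 0" unfolding P_def by (rule prod_list_nonneg) auto
  have "e / (P + 1) > 0" using \<open>e > 0\<close> P0 by simp
  then obtain d where d: "d > 0" "\<And>y hs. norm (y - x) < d \<Longrightarrow> length hs = n \<Longrightarrow>
     norm (D n y hs - D n x hs - D (Suc n) x ((y - x) # hs)) \<le> e / (P + 1) * norm (y - x) * (\<Prod>h\<leftarrow>hs. norm h)"
    using tower_remainder[of "e / (P + 1)" x n] by blast
  have "e / (P + 1) * norm (y - x) * P \<le> e * norm (y - x)" for y
  proof -
    have "e / (P + 1) * P \<le> e" using P0 \<open>e > 0\<close> by (simp add: field_simps)
    then show ?thesis by (metis mult.commute mult.left_commute mult_left_mono norm_ge_zero)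
  qed
  with d(1) d(2)[OF _ assms] show "\<exists>d>0. \<forall>y. norm (y - x) < d \<longrightarrow> norm (D n y hs - D n x hs - D (Suc n) x ((y - x) # hs)) \<le> e * norm (y - x)"
    unfolding P_def by (intro exI[of _ d]) (auto intro: order_trans)
qed

lemma tower_local_lipschitz:
  obtains C d where "C \<ge> 0" "d > 0" "\<And>y hs. norm (y - x) < d \<Longrightarrow> length hs = n \<Longrightarrow>
     norm (D n y hs - D n x hs) \<le> C * norm (y - x) * (\<Prod>h\<leftarrow>hs. norm h)"
proof -
  obtain d where d: "d > 0" "\<And>y hs. norm (y - x) < d \<Longrightarrow> length hs = n \<Longrightarrow>
     norm (D n y hs - D n x hs - D (Suc n) x ((y - x) # hs)) \<le> 1 * norm (y - x) * (\<Prod>h\<leftarrow>hs. norm h)"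
    using tower_remainder[of 1 x n] by auto
  obtain K where K: "K \<ge> 0" "\<And>hs. length hs = Suc n \<Longrightarrow> norm (D (Suc n) x hs) \<le> K * (\<Prod>h\<leftarrow>hs. norm h)"
    using mlin_bounded_normE[OF tower_mlin] by blast
  show ?thesis
  proof (rule that[of "1 + K" d])
    fix y hs assume y: "norm (y - x) < d" and l: "length (hs::'v list) = n"
    have "norm (D n y hs - D n x hs) \<le> norm (D n y hs - D n x hs - D (Suc n) x ((y - x) # hs)) + norm (D (Suc n) x ((y - x) # hs))"
      by (metis diff_add_cancel norm_triangle_ineq)
    also have "\<dots> \<le> 1 * norm (y - x) * (\<Prod>h\<leftarrow>hs. norm h) + K * (norm (y - x) * (\<Prod>h\<leftarrow>hs. norm h))"
      using d(2)[OF y l] K(2)[of "(y - x) # hs"] l by (intro add_mono) auto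
    finally show "norm (D n y hs - D n x hs) \<le> (1 + K) * norm (y - x) * (\<Prod>h\<leftarrow>hs. norm h)"
      by (simp add: algebra_simps)
  qed (use K d in auto)
qed

lemma has_vector_derivative_tower_line:
  assumes "length hs = n"
  shows "((\<lambda>\<tau>. D n (p + \<tau> *\<^sub>R a) hs) has_vector_derivative D (Suc n) (p + \<tau> *\<^sub>R a) (a # hs)) (at \<tau>)"
proof -
  have "((\<lambda>\<tau>. p + \<tau> *\<^sub>R a) has_derivative (\<lambda>h. h *\<^sub>R a)) (at \<tau>)"
    by (auto intro!: derivative_eq_intros)
  from diff_chain_at[OF this has_derivative_tower[OF assms]]
  show ?thesis
    unfolding has_vector_derivative_def using tower_head_scale[OF assms] by (simp add: o_def)
qed

lemma tower_remainder_pair: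
  assumes "e > 0"
  shows "\<exists>d>0. \<forall>y1 y2 hs. norm (y1 - x) < d \<longrightarrow> norm (y2 - x) < d \<longrightarrow> length hs = n \<longrightarrow>
     norm (D n y1 hs - D n y2 hs - D (Suc n) x ((y1 - y2) # hs))
       \<le> e * (norm (y1 - x) + norm (y2 - x)) * (\<Prod>h\<leftarrow>hs. norm h)"
proof -
  obtain d where d: "d > 0" "\<And>y hs. norm (y - x) < d \<Longrightarrow> length hs = n \<Longrightarrow>
     norm (D n y hs - D n x hs - D (Suc n) x ((y - x) # hs)) \<le> e * norm (y - x) * (\<Prod>h\<leftarrow>hs. norm h)"
    using tower_remainder[OF assms, of x n] by blast
  show ?thesis
  proof (intro exI[of _ d] conjI allI impI)
    fix y1 y2 hs assume y: "norm (y1 - x) < d" "norm (y2 - x) < d" and l: "length (hs::'v list) = n"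
    have "D n y1 hs - D n y2 hs - D (Suc n) x ((y1 - y2) # hs) =
        (D n y1 hs - D n x hs - D (Suc n) x ((y1 - x) # hs)) - (D n y2 hs - D n x hs - D (Suc n) x ((y2 - x) # hs))"
      using tower_head_diff[OF l, of x "y1 - x" "y2 - x"] by (simp add: algebra_simps)
    also have "norm \<dots> \<le> norm (D n y1 hs - D n x hs - D (Suc n) x ((y1 - x) # hs))
        + norm (D n y2 hs - D n x hs - D (Suc n) x ((y2 - x) # hs))"
      by (rule norm_triangle_ineq4)
    also have "\<dots> \<le> e * norm (y1 - x) * (\<Prod>h\<leftarrow>hs. norm h) + e * norm (y2 - x) * (\<Prod>h\<leftarrow>hs. norm h)"
      using d(2)[OF y(1) l] d(2)[OF y(2) l] by (rule add_mono)
    finally show "norm (D n y1 hs - D n y2 hs - D (Suc n) x ((y1 - y2) # hs))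
       \<le> e * (norm (y1 - x) + norm (y2 - x)) * (\<Prod>h\<leftarrow>hs. norm h)"
      by (simp add: algebra_simps)
  qed (use d in auto)
qed

text \<open>Schwarz's theorem for towers: the mixed second difference below is symmetric in \<open>a\<close>
  and \<open>b\<close>, and divided by \<open>t\<^sup>2\<close> it tends to \<open>D (m + 2) x (b # a # hs)\<close> by the mean value
  inequality.\<close>

lemma tower_second_difference_bound:
  assumes "length hs = m" "e > 0"
  shows "\<exists>d>0. \<forall>t. 0 < t \<and> t < d \<longrightarrow>
    norm ((D m (x + t *\<^sub>R a + t *\<^sub>R b) hs - D m (x + t *\<^sub>R a) hs - D m (x + t *\<^sub>R b) hs + D m x hs)
       - (t * t) *\<^sub>R D (Suc (Suc m)) x (b # a # hs))
    \<le> e * (t * t) * (2 * (norm a + norm b) * norm a * (\<Prod>h\<leftarrow>hs. norm h))"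
proof -
  define P where "P = (\<Prod>h\<leftarrow>hs. norm h)"
  have P0: "P \<ge> 0" unfolding P_def by (rule prod_list_nonneg) auto
  have l: "length (a # hs) = Suc m" using assms(1) by simp
  have Pa: "(\<Prod>h\<leftarrow>a # hs. norm h) = norm a * P" unfolding P_def by simp
  obtain d0 where d0: "d0 > 0" "\<forall>y1 y2 hs'. norm (y1 - x) < d0 \<longrightarrow> norm (y2 - x) < d0 \<longrightarrow> length hs' = Suc m \<longrightarrow>
     norm (D (Suc m) y1 hs' - D (Suc m) y2 hs' - D (Suc (Suc m)) x ((y1 - y2) # hs'))
       \<le> e * (norm (y1 - x) + norm (y2 - x)) * (\<Prod>h\<leftarrow>hs'. norm h)"
    using tower_remainder_pair[OF assms(2), of x "Suc m"] by blast
  define d where "d = d0 / (norm a + norm b + 1)"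
  show ?thesis
  proof (intro exI[of _ d] conjI allI impI)
    show "d > 0" unfolding d_def using d0 by (simp add: add_nonneg_pos)
    fix t :: real assume "0 < t \<and> t < d"
    then have t: "0 < t" "t < d" by auto
    define B where "B = D (Suc (Suc m)) x (b # a # hs)"
    define \<phi> where "\<phi> \<tau> = D m (x + t *\<^sub>R b + \<tau> *\<^sub>R a) hs - D m (x + \<tau> *\<^sub>R a) hs - \<tau> *\<^sub>R (t *\<^sub>R B)" for \<tau>
    define \<phi>' where "\<phi>' \<tau> = D (Suc m) (x + t *\<^sub>R b + \<tau> *\<^sub>R a) (a # hs) - D (Suc m) (x + \<tau> *\<^sub>R a) (a # hs) - t *\<^sub>R B" for \<tau>
    have "t * (norm a + norm b + 1) < d0"
      using t(2) unfolding d_def by (simp add: pos_less_divide_eq add_nonneg_pos)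
    then have td: "t * (norm a + norm b) < d0"
      using t(1) by (simp add: distrib_left)
    have der: "(\<phi> has_vector_derivative \<phi>' \<tau>) (at \<tau>)" for \<tau>
      unfolding \<phi>_def \<phi>'_def
      by (intro has_vector_derivative_diff has_vector_derivative_tower_line assms(1)
          has_vector_derivative_scaleR[OF DERIV_ident has_vector_derivative_const, simplified])
    have bnd: "norm (\<phi>' \<tau>) \<le> e * t * (2 * (norm a + norm b) * norm a * P)" if \<tau>: "\<tau> \<in> {0..t}" for \<tau>
    proof -
      define y1 where "y1 = x + t *\<^sub>R b + \<tau> *\<^sub>R a"
      define y2 where "y2 = x + \<tau> *\<^sub>R a"
      have ta: "\<tau> * norm a \<le> t * norm a" using \<tau> by (intro mult_right_mono) auto
      have tb: "0 \<le> t * norm b" using t by simp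
      have "norm (y1 - x) \<le> norm (t *\<^sub>R b) + norm (\<tau> *\<^sub>R a)"
        unfolding y1_def by (metis add.assoc add_diff_cancel_left' norm_triangle_ineq)
      then have n1: "norm (y1 - x) \<le> t * (norm a + norm b)"
        using \<tau> t ta by (simp add: distrib_left)
      have "norm (y2 - x) = \<tau> * norm a" using \<tau> unfolding y2_def by simp
      then have n2: "norm (y2 - x) \<le> t * (norm a + norm b)"
        using ta tb by (simp add: distrib_left)
      have "\<phi>' \<tau> = D (Suc m) y1 (a # hs) - D (Suc m) y2 (a # hs) - D (Suc (Suc m)) x ((y1 - y2) # a # hs)"
        unfolding \<phi>'_def y1_def y2_def B_def using tower_head_scale[OF l, of x t b] by simp
      also have "norm \<dots> \<le> e * (norm (y1 - x) + norm (y2 - x)) * (norm a * P)"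
      proof -
        have "norm (y1 - x) < d0" "norm (y2 - x) < d0" using n1 n2 td by linarith+
        then show ?thesis using d0(2)[rule_format, OF _ _ l] unfolding Pa by simp
      qed
      also have "\<dots> \<le> e * (2 * (t * (norm a + norm b))) * (norm a * P)"
        using n1 n2 \<open>e > 0\<close> P0 by (intro mult_right_mono mult_left_mono) auto
      finally show ?thesis by (simp add: algebra_simps)
    qed
    have "norm (\<phi> t - \<phi> 0) \<le> e * t * (2 * (norm a + norm b) * norm a * P) * (t - 0)"
      by (rule norm_diff_le_of_vector_derivative_bound[OF der bnd]) (use t in auto)
    moreover have "\<phi> t - \<phi> 0 = (D m (x + t *\<^sub>R a + t *\<^sub>R b) hs - D m (x + t *\<^sub>R a) hs - D m (x + t *\<^sub>R b) hs + D m x hs)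
       - (t * t) *\<^sub>R B"
      unfolding \<phi>_def by (simp add: algebra_simps)
    ultimately show "norm ((D m (x + t *\<^sub>R a + t *\<^sub>R b) hs - D m (x + t *\<^sub>R a) hs - D m (x + t *\<^sub>R b) hs + D m x hs)
       - (t * t) *\<^sub>R D (Suc (Suc m)) x (b # a # hs))
      \<le> e * (t * t) * (2 * (norm a + norm b) * norm a * (\<Prod>h\<leftarrow>hs. norm h))"
      unfolding B_def P_def by (simp add: algebra_simps)
  qed
qed

lemma tendsto_tower_second_difference:
  assumes "length hs = m"
  shows "((\<lambda>t. (D m (x + t *\<^sub>R a + t *\<^sub>R b) hs - D m (x + t *\<^sub>R a) hs - D m (x + t *\<^sub>R b) hs + D m x hs)
      /\<^sub>R (t * t)) \<longlongrightarrow> D (Suc (Suc m)) x (b # a # hs)) (at_right 0)"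
  unfolding tendsto_iff
proof (intro allI impI)
  fix \<epsilon> :: real assume "\<epsilon> > 0"
  define C where "C = 2 * (norm a + norm b) * norm a * (\<Prod>h\<leftarrow>hs. norm h)"
  have C0: "C \<ge> 0" unfolding C_def by (intro mult_nonneg_nonneg prod_list_nonneg) auto
  then have e: "\<epsilon> / (C + 1) > 0" using \<open>\<epsilon> > 0\<close> by simp
  obtain d where d: "d > 0" "\<And>t. 0 < t \<and> t < d \<Longrightarrow>
    norm ((D m (x + t *\<^sub>R a + t *\<^sub>R b) hs - D m (x + t *\<^sub>R a) hs - D m (x + t *\<^sub>R b) hs + D m x hs)
       - (t * t) *\<^sub>R D (Suc (Suc m)) x (b # a # hs)) \<le> \<epsilon> / (C + 1) * (t * t) * C"
    using tower_second_difference_bound[OF assms e] unfolding C_def by blast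
  have "\<forall>\<^sub>F t in at_right 0. 0 < t \<and> t < d"
    using d(1) by (simp add: eventually_at_right_field) (metis add_0)
  then show "\<forall>\<^sub>F t in at_right 0. dist ((D m (x + t *\<^sub>R a + t *\<^sub>R b) hs - D m (x + t *\<^sub>R a) hs - D m (x + t *\<^sub>R b) hs + D m x hs)
      /\<^sub>R (t * t)) (D (Suc (Suc m)) x (b # a # hs)) < \<epsilon>"
  proof eventually_elim
    case (elim t)
    let ?\<Delta> = "D m (x + t *\<^sub>R a + t *\<^sub>R b) hs - D m (x + t *\<^sub>R a) hs - D m (x + t *\<^sub>R b) hs + D m x hs"
    have "?\<Delta> /\<^sub>R (t * t) - D (Suc (Suc m)) x (b # a # hs)
        = (?\<Delta> - (t * t) *\<^sub>R D (Suc (Suc m)) x (b # a # hs)) /\<^sub>R (t * t)"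
    proof -
      have "inverse t * inverse t * (t * t) = 1" using elim by (simp add: field_simps)
      then show ?thesis by (simp add: scaleR_diff_right)
    qed
    then have "dist (?\<Delta> /\<^sub>R (t * t)) (D (Suc (Suc m)) x (b # a # hs))
        = norm (?\<Delta> - (t * t) *\<^sub>R D (Suc (Suc m)) x (b # a # hs)) / (t * t)"
      by (simp only: dist_norm) (simp add: divide_inverse_commute)
    also have "\<dots> \<le> \<epsilon> / (C + 1) * C"
      using d(2)[of t] elim by (simp add: pos_divide_le_eq ac_simps)
    also have "\<dots> < \<epsilon>" using C0 \<open>\<epsilon> > 0\<close> by (simp add: field_simps)
    finally show ?case .
  qed
qed

lemma tower_swap:
  assumes "length hs = m"
  shows "D (Suc (Suc m)) x (a # b # hs) = D (Suc (Suc m)) x (b # a # hs)"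
proof (rule tendsto_unique[OF trivial_limit_at_right_real])
  show "((\<lambda>t. (D m (x + t *\<^sub>R a + t *\<^sub>R b) hs - D m (x + t *\<^sub>R a) hs - D m (x + t *\<^sub>R b) hs + D m x hs)
      /\<^sub>R (t * t)) \<longlongrightarrow> D (Suc (Suc m)) x (b # a # hs)) (at_right 0)"
    by (rule tendsto_tower_second_difference[OF assms])
  show "((\<lambda>t. (D m (x + t *\<^sub>R a + t *\<^sub>R b) hs - D m (x + t *\<^sub>R a) hs - D m (x + t *\<^sub>R b) hs + D m x hs)
      /\<^sub>R (t * t)) \<longlongrightarrow> D (Suc (Suc m)) x (a # b # hs)) (at_right 0)"
    using tendsto_tower_second_difference[OF assms, of x b a] by (simp add: algebra_simps)
qed

lemma tower_tail_cong:
  assumes "\<And>y. D n y l1 = D n y l2" "length l1 = n" "length l2 = n"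
  shows "D (Suc n) x (h # l1) = D (Suc n) x (h # l2)"
proof -
  have eq: "(\<lambda>y. D n y l1) = (\<lambda>y. D n y l2)" using assms(1) by auto
  have "(\<lambda>h. D (Suc n) x (h # l1)) = (\<lambda>h. D (Suc n) x (h # l2))"
    using has_derivative_unique[OF has_derivative_tower[OF assms(2), of x]
        has_derivative_tower[OF assms(3), of x, folded eq]] .
  then show ?thesis by metis
qed

lemma tower_move_past_replicate:
  assumes "length (a # replicate k c @ r) = n"
  shows "D n x (a # replicate k c @ r) = D n x (replicate k c @ a # r)"
  using assms
proof (induction k arbitrary: n x)
  case (Suc k)
  then obtain m where n: "n = Suc (Suc m)" and lm: "length (replicate k c @ r) = m" by auto
  have "D n x (a # replicate (Suc k) c @ r) = D n x (c # a # replicate k c @ r)"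
    unfolding n using tower_swap[OF lm, of x a c] by simp
  also have "\<dots> = D n x (c # replicate k c @ a # r)"
    unfolding n by (rule tower_tail_cong) (use Suc.IH lm in auto)
  finally show ?case by simp
qed simp

lemma tendsto_tower_remainder_ratio:
  assumes "length hs = n" "(y \<longlongrightarrow> x) F" "\<forall>\<^sub>F s in F. y s \<noteq> x"
  shows "((\<lambda>s. norm (D n (y s) hs - D n x hs - D (Suc n) x ((y s - x) # hs)) / norm (y s - x)) \<longlongrightarrow> 0) F"
  using has_derivative_tower[OF assms(1), of x] tendsto_compose_eventually[OF _ assms(2,3)]
  unfolding has_derivative_iff_norm by blast

lemma tendsto_tower_remainder_quotient:
  fixes hs :: "real \<Rightarrow> 'v list" and y :: "real \<Rightarrow> 'v"
  assumes lhs: "\<And>s. length (hs s) = n" and dy: "(y has_vector_derivative y') (at x)"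
    and hcont: "\<And>i. i < n \<Longrightarrow> ((\<lambda>s. hs s ! i) \<longlongrightarrow> hs x ! i) (at x)"
  shows "((\<lambda>s. (D n (y s) (hs s) - D n (y x) (hs s) - D (Suc n) (y x) ((y s - y x) # hs s)) /\<^sub>R (s - x))
    \<longlongrightarrow> 0) (at x)"
  unfolding tendsto_iff
proof (intro allI impI)
  fix \<epsilon> :: real assume "\<epsilon> > 0"
  define q where "q s = norm ((y s - y x) /\<^sub>R (s - x)) * (\<Prod>h\<leftarrow>hs s. norm h)" for s
  define L where "L = norm y' * (\<Prod>h\<leftarrow>hs x. norm h)"
  have L0: "L \<ge> 0" unfolding L_def by (intro mult_nonneg_nonneg prod_list_nonneg) auto
  have "(q \<longlongrightarrow> L) (at x)" unfolding q_def L_def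
    using dy hcont lhs unfolding has_vector_derivative_iff_quotient
    by (intro tendsto_mult tendsto_norm tendsto_prod_list_norm) auto
  then have ev1: "\<forall>\<^sub>F s in at x. q s < L + 1" by (rule order_tendstoD) simp
  define e where "e = \<epsilon> / (L + 2)"
  have e: "e > 0" unfolding e_def using \<open>\<epsilon> > 0\<close> L0 by simp
  obtain d where d: "d > 0" "\<forall>z hs. norm (z - y x) < d \<longrightarrow> length hs = n \<longrightarrow>
    norm (D n z hs - D n (y x) hs - D (Suc n) (y x) ((z - y x) # hs)) \<le> e * norm (z - y x) * (\<Prod>h\<leftarrow>hs. norm h)"
    using tower_remainder[OF e, of "y x" n] by blast
  have "isCont y x" using dy by (rule has_vector_derivative_continuous)
  then have ev2: "\<forall>\<^sub>F s in at x. dist (y s) (y x) < d"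
    using d(1) unfolding isCont_def tendsto_iff by blast
  have ev3: "\<forall>\<^sub>F s in at x. s \<noteq> x" by (simp add: eventually_at_filter)
  show "\<forall>\<^sub>F s in at x. dist ((D n (y s) (hs s) - D n (y x) (hs s) - D (Suc n) (y x) ((y s - y x) # hs s)) /\<^sub>R (s - x)) 0 < \<epsilon>"
    using ev1 ev2 ev3
  proof eventually_elim
    case (elim s)
    have "norm (D n (y s) (hs s) - D n (y x) (hs s) - D (Suc n) (y x) ((y s - y x) # hs s))
        \<le> e * norm (y s - y x) * (\<Prod>h\<leftarrow>hs s. norm h)"
      using d(2) elim(2) lhs by (simp add: dist_norm)
    then have "norm ((D n (y s) (hs s) - D n (y x) (hs s) - D (Suc n) (y x) ((y s - y x) # hs s)) /\<^sub>R (s - x))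
        \<le> e * q s"
      unfolding q_def using elim(3) by (simp add: divide_simps ac_simps)
    also have "\<dots> \<le> e * (L + 1)" using elim(1) e by simp
    also have "\<dots> < \<epsilon>" unfolding e_def using \<open>\<epsilon> > 0\<close> L0 by (simp add: field_simps)
    finally show ?case by simp
  qed
qed

lemma has_vector_derivative_tower_chain:
  fixes hs :: "real \<Rightarrow> 'v list" and y :: "real \<Rightarrow> 'v"
  assumes lhs: "\<And>s. length (hs s) = n" and lhs': "length hs' = n"
    and dy: "(y has_vector_derivative y') (at x)"
    and dhs: "\<And>i. i < n \<Longrightarrow> ((\<lambda>s. hs s ! i) has_vector_derivative hs' ! i) (at x)"
  shows "((\<lambda>s. D n (y s) (hs s)) has_vector_derivative
     (D (Suc n) (y x) (y' # hs x) + (\<Sum>i<n. D n (y x) ((hs x)[i := hs' ! i])))) (at x)"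
proof -
  define \<psi> where "\<psi> s = D n (y s) (hs s) - D n (y x) (hs s)" for s
  have hcont: "((\<lambda>s. hs s ! i) \<longlongrightarrow> hs x ! i) (at x)" if "i < n" for i
    using has_vector_derivative_continuous[OF dhs[OF that]] by (simp add: isCont_def)
  have d1: "(\<psi> has_vector_derivative D (Suc n) (y x) (y' # hs x)) (at x)"
    unfolding has_vector_derivative_iff_quotient
  proof -
    have split: "(\<psi> s - \<psi> x) /\<^sub>R (s - x) = D (Suc n) (y x) (((y s - y x) /\<^sub>R (s - x)) # hs s)
        + (D n (y s) (hs s) - D n (y x) (hs s) - D (Suc n) (y x) ((y s - y x) # hs s)) /\<^sub>R (s - x)" for s
      unfolding \<psi>_def tower_head_scale[OF lhs] by (simp add: algebra_simps)
    have "((\<lambda>s. D (Suc n) (y x) (((y s - y x) /\<^sub>R (s - x)) # hs s)) \<longlongrightarrow> D (Suc n) (y x) (y' # hs x)) (at x)"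
    proof (rule tendsto_mlin_bounded[OF tower_mlin])
      fix i assume "i < Suc n"
      then show "((\<lambda>s. (((y s - y x) /\<^sub>R (s - x)) # hs s) ! i) \<longlongrightarrow> (y' # hs x) ! i) (at x)"
        using dy hcont unfolding has_vector_derivative_iff_quotient by (cases i) auto
    qed (use lhs in auto)
    then show "((\<lambda>s. (\<psi> s - \<psi> x) /\<^sub>R (s - x)) \<longlongrightarrow> D (Suc n) (y x) (y' # hs x)) (at x)"
      unfolding split using tendsto_add[OF _ tendsto_tower_remainder_quotient[OF lhs dy hcont]] by simp
  qed
  have d2: "((\<lambda>s. D n (y x) (hs s)) has_vector_derivative (\<Sum>i<n. D n (y x) ((hs x)[i := hs' ! i]))) (at x)"
    by (rule has_vector_derivative_mlin_bounded[OF tower_mlin lhs lhs' dhs])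
  have "(\<lambda>s. D n (y s) (hs s)) = (\<lambda>s. \<psi> s + D n (y x) (hs s))" unfolding \<psi>_def by auto
  then show ?thesis using has_vector_derivative_add[OF d1 d2] by simp
qed

end

lemma tower_unique:
  assumes "Cinf_tower f D" "Cinf_tower f E" "length hs = n"
  shows "D n x hs = E n x hs"
  using assms(3)
proof (induction n arbitrary: x hs)
  case 0
  then show ?case using tower_0[OF assms(1)] tower_0[OF assms(2)] by simp
next
  case (Suc n)
  then obtain h t where hs: "hs = h # t" and lt: "length t = n" by (cases hs) auto
  have eq: "(\<lambda>y. D n y t) = (\<lambda>y. E n y t)" using Suc.IH[OF lt] by auto
  have "(\<lambda>h. D (Suc n) x (h # t)) = (\<lambda>h. E (Suc n) x (h # t))"
    using has_derivative_unique[OF has_derivative_tower[OF assms(1) lt, of x]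
        has_derivative_tower[OF assms(2) lt, of x, folded eq]] .
  then show ?case unfolding hs by metis
qed

lemma mlin_bounded_compose_linear:
  fixes P :: "'a::real_normed_vector \<Rightarrow> 'b::real_normed_vector"
    and M :: "'b list \<Rightarrow> 'c::real_normed_vector" and A :: "'c \<Rightarrow> 'd::real_normed_vector"
  assumes "mlin_bounded n M" "bounded_linear A" "bounded_linear P"
  shows "mlin_bounded n (\<lambda>hs. A (M (map P hs)))"
proof -
  obtain KA where KA: "KA > 0" "\<And>x. norm (A x) \<le> norm x * KA"
    using bounded_linear.pos_bounded[OF assms(2)] by blast
  obtain KP where KP: "KP > 0" "\<And>x. norm (P x) \<le> KP * norm x"
    using bounded_linear.pos_bounded[OF assms(3)] by (auto simp: ac_simps)
  obtain KM where KM: "KM \<ge> 0" "\<And>hs. length hs = n \<Longrightarrow> norm (M hs) \<le> KM * (\<Prod>h\<leftarrow>hs. norm h)"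
    using mlin_bounded_normE[OF assms(1)] by blast
  have A: "linear A" and P: "linear P" using assms(2,3) bounded_linear.linear by blast+
  show ?thesis unfolding mlin_bounded_def
  proof (intro conjI allI impI exI)
    fix i and hs :: "'a list" and x y and c :: real assume i: "i < n" and l: "length hs = n"
    then have l': "length (map P hs) = n" by simp
    show "A (M (map P (hs[i := x + y]))) = A (M (map P (hs[i := x]))) + A (M (map P (hs[i := y])))"
      unfolding map_update linear_add[OF P] mlin_bounded_add[OF assms(1) i l'] linear_add[OF A] ..
    show "A (M (map P (hs[i := c *\<^sub>R x]))) = c *\<^sub>R A (M (map P (hs[i := x])))"
      unfolding map_update linear_scale[OF P] mlin_bounded_scale[OF assms(1) i l'] linear_scale[OF A] ..
  next
    fix hs :: "'a list" assume l: "length hs = n"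
    have "norm (A (M (map P hs))) \<le> KM * (\<Prod>h\<leftarrow>map P hs. norm h) * KA"
      using KA(2)[of "M (map P hs)"] KM(2)[of "map P hs"] l KA(1) by (meson length_map mult_right_mono order_trans less_imp_le)
    also have "\<dots> \<le> KM * (KP ^ n * (\<Prod>h\<leftarrow>hs. norm h)) * KA"
      using prod_list_norm_map_le[OF KP(2), of hs] KP(1) KM(1) KA(1) l
      by (intro mult_right_mono mult_left_mono) auto
    finally show "norm (A (M (map P hs))) \<le> KA * KM * KP ^ n * (\<Prod>h\<leftarrow>hs. norm h)"
      by (simp add: ac_simps)
  qed
qed

lemma Cinf_tower_compose_affine:
  fixes f :: "'v::real_normed_vector \<Rightarrow> 'w::real_normed_vector"
    and P :: "'u::real_normed_vector \<Rightarrow> 'v" and A :: "'w \<Rightarrow> 'z::real_normed_vector"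
  assumes tw: "Cinf_tower f D" and A: "bounded_linear A" and P: "bounded_linear P"
  shows "Cinf_tower (\<lambda>x. A (f (c + P x))) (\<lambda>n x hs. A (D n (c + P x) (map P hs)))"
  unfolding Cinf_tower_def
proof (intro conjI allI impI)
  show "A (D 0 (c + P x) (map P [])) = A (f (c + P x))" for x
    using tower_0[OF tw] by simp
  show "mlin_bounded n (\<lambda>hs. A (D n (c + P x) (map P hs)))" for n x
    by (rule mlin_bounded_compose_linear[OF tower_mlin[OF tw] A P])
next
  fix n x and e :: real assume "e > 0"
  obtain KA where KA: "KA > 0" "\<And>x. norm (A x) \<le> norm x * KA"
    using bounded_linear.pos_bounded[OF A] by blast
  obtain KP where KP: "KP > 0" "\<And>x. norm (P x) \<le> KP * norm x"
    using bounded_linear.pos_bounded[OF P] by (auto simp: ac_simps)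
  define C where "C = KA * KP ^ Suc n"
  have C0: "C > 0" unfolding C_def using KA KP by simp
  define \<phi> where "\<phi> y = c + P y" for y
  have \<phi>: "\<phi> y - \<phi> x = P (y - x)" for y
    unfolding \<phi>_def using linear_diff[OF bounded_linear.linear[OF P]] by simp
  obtain d where d: "d > 0" "\<forall>z hs. norm (z - \<phi> x) < d \<longrightarrow> length hs = n \<longrightarrow>
     norm (D n z hs - D n (\<phi> x) hs - D (Suc n) (\<phi> x) ((z - \<phi> x) # hs)) \<le> e / C * norm (z - \<phi> x) * (\<Prod>h\<leftarrow>hs. norm h)"
    using tower_remainder[OF tw, of "e / C" "\<phi> x" n] C0 \<open>e > 0\<close> by auto
  show "\<exists>d>0. \<forall>y. norm (y - x) < d \<longrightarrow> (\<forall>hs. length hs = n \<longrightarrow>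
      norm (A (D n (c + P y) (map P hs)) - A (D n (c + P x) (map P hs)) - A (D (Suc n) (c + P x) (map P ((y - x) # hs))))
        \<le> e * norm (y - x) * (\<Prod>h\<leftarrow>hs. norm h))"
  proof (intro exI[of _ "d / KP"] conjI allI impI)
    show "d / KP > 0" using d KP by simp
    fix y and hs :: "'u list" assume y: "norm (y - x) < d / KP" and l: "length hs = n"
    have ny: "norm (\<phi> y - \<phi> x) \<le> KP * norm (y - x)" unfolding \<phi> by (rule KP(2))
    also have "\<dots> < d" using y KP(1) by (simp add: field_simps)
    finally have yd: "norm (\<phi> y - \<phi> x) < d" .
    have "A (D n (c + P y) (map P hs)) - A (D n (c + P x) (map P hs)) - A (D (Suc n) (c + P x) (map P ((y - x) # hs)))
      = A (D n (\<phi> y) (map P hs) - D n (\<phi> x) (map P hs) - D (Suc n) (\<phi> x) ((\<phi> y - \<phi> x) # map P hs))"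
      unfolding \<phi> using linear_diff[OF bounded_linear.linear[OF A]] by (simp add: \<phi>_def)
    also have "norm \<dots> \<le> norm (D n (\<phi> y) (map P hs) - D n (\<phi> x) (map P hs) - D (Suc n) (\<phi> x) ((\<phi> y - \<phi> x) # map P hs)) * KA"
      by (rule KA(2))
    also have "\<dots> \<le> (e / C * norm (\<phi> y - \<phi> x) * (\<Prod>h\<leftarrow>map P hs. norm h)) * KA"
      using d(2)[rule_format, OF yd, of "map P hs"] l KA(1) by (intro mult_right_mono) auto
    also have "\<dots> \<le> (e / C * (KP * norm (y - x)) * (KP ^ n * (\<Prod>h\<leftarrow>hs. norm h))) * KA"
      using ny prod_list_norm_map_le[OF KP(2), of hs] KP(1) KA(1) C0 \<open>e > 0\<close> l
      by (intro mult_right_mono mult_mono prod_list_nonneg) auto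
    also have "\<dots> = e * norm (y - x) * (\<Prod>h\<leftarrow>hs. norm h)"
      unfolding C_def using KA(1) KP(1) by (simp add: field_simps)
    finally show "norm (A (D n (c + P y) (map P hs)) - A (D n (c + P x) (map P hs))
        - A (D (Suc n) (c + P x) (map P ((y - x) # hs)))) \<le> e * norm (y - x) * (\<Prod>h\<leftarrow>hs. norm h)" .
  qed
qed

section \<open>Strongly continuous groups and the spaces \<open>U\<^sub>l\<close>\<close>

lemma norm_l_0 [simp]: "norm_l T 0 = norm"
  unfolding norm_l_def by (simp add: fun_eq_iff)

locale strongly_continuous_group =
  fixes T :: "real \<Rightarrow> 'a::banach \<Rightarrow> 'a"
  assumes sc_group: "sc_group T"
begin

lemma T_bounded_linear: "bounded_linear (T s)"
  using sc_group unfolding sc_group_def by blast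

lemma T_0 [simp]: "T 0 v = v"
  using sc_group unfolding sc_group_def by simp

lemma T_T: "T a (T b v) = T (a + b) v"
  using sc_group unfolding sc_group_def by (metis comp_apply)

lemma T_minus_T [simp]: "T (-s) (T s v) = v"
  by (simp add: T_T)

lemma T_T_minus [simp]: "T s (T (-s) v) = v"
  by (simp add: T_T)

lemma T_add: "T s (u + v) = T s u + T s v"
  using linear_add[OF bounded_linear.linear[OF T_bounded_linear]] .

lemma T_scale: "T s (c *\<^sub>R u) = c *\<^sub>R T s u"
  using linear_scale[OF bounded_linear.linear[OF T_bounded_linear]] .

lemma T_zero [simp]: "T s 0 = 0"
  using linear_0[OF bounded_linear.linear[OF T_bounded_linear]] .

lemma tendsto_T: "((\<lambda>s. T s u) \<longlongrightarrow> T x u) (at x)"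
  using sc_group unfolding sc_group_def by (simp add: continuous_on_def)

lemma Ul_Suc_iff: "u \<in> Ul T (Suc l) \<longleftrightarrow> u \<in> Ul T (Suc 0) \<and> gen T u \<in> Ul T l"
proof (induction l arbitrary: u)
  case (Suc l)
  have "u \<in> Ul T (Suc (Suc l)) \<longleftrightarrow> u \<in> Ul T (Suc l) \<and> (\<lambda>s. T s ((gen T ^^ Suc l) u)) differentiable (at 0)"
    by simp
  also have "\<dots> \<longleftrightarrow> u \<in> Ul T (Suc 0) \<and> gen T u \<in> Ul T l \<and> (\<lambda>s. T s ((gen T ^^ l) (gen T u))) differentiable (at 0)"
    using Suc.IH by (simp add: funpow_Suc_right del: funpow.simps)
  also have "\<dots> \<longleftrightarrow> u \<in> Ul T (Suc 0) \<and> gen T u \<in> Ul T (Suc l)" by simp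
  finally show ?case .
qed simp

lemma Ul_Suc_subset: "Ul T (Suc l) \<subseteq> Ul T l"
  by auto

lemma has_vector_derivative_gen: "u \<in> Ul T (Suc 0) \<Longrightarrow> ((\<lambda>s. T s u) has_vector_derivative gen T u) (at 0)"
  unfolding gen_def using vector_derivative_works by auto

lemma gen_eqI:
  assumes "((\<lambda>s. T s u) has_vector_derivative w) (at 0)"
  shows "u \<in> Ul T (Suc 0)" "gen T u = w"
  using assms differentiableI_vector vector_derivative_at unfolding gen_def by auto

lemma gen_add:
  assumes "u \<in> Ul T (Suc 0)" "v \<in> Ul T (Suc 0)"
  shows "u + v \<in> Ul T (Suc 0) \<and> gen T (u + v) = gen T u + gen T v"
proof -
  have "((\<lambda>s. T s (u + v)) has_vector_derivative gen T u + gen T v) (at 0)"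
    using has_vector_derivative_add[OF has_vector_derivative_gen[OF assms(1)] has_vector_derivative_gen[OF assms(2)]]
    by (simp add: T_add)
  then show ?thesis using gen_eqI by blast
qed

lemma gen_scale:
  assumes "u \<in> Ul T (Suc 0)"
  shows "c *\<^sub>R u \<in> Ul T (Suc 0) \<and> gen T (c *\<^sub>R u) = c *\<^sub>R gen T u"
proof -
  have "((\<lambda>s. T s (c *\<^sub>R u)) has_vector_derivative c *\<^sub>R gen T u) (at 0)"
    using has_vector_derivative_scaleR[OF DERIV_const has_vector_derivative_gen[OF assms]]
    by (simp add: T_scale)
  then show ?thesis using gen_eqI by blast
qed

lemma gen_zero: "0 \<in> Ul T (Suc 0) \<and> gen T 0 = 0"
  using gen_eqI[of 0 0] by simp

lemma Ul_add: "u \<in> Ul T l \<Longrightarrow> v \<in> Ul T l \<Longrightarrow> u + v \<in> Ul T l"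
proof (induction l arbitrary: u v)
  case (Suc l)
  then show ?case using gen_add by (simp only: Ul_Suc_iff[of _ l])
qed simp

lemma Ul_scale: "u \<in> Ul T l \<Longrightarrow> c *\<^sub>R u \<in> Ul T l"
proof (induction l arbitrary: u)
  case (Suc l)
  then show ?case using gen_scale by (simp only: Ul_Suc_iff[of _ l])
qed simp

lemma Ul_zero: "0 \<in> Ul T l"
proof (induction l)
  case (Suc l)
  then show ?case using gen_zero by (simp only: Ul_Suc_iff[of _ l])
qed simp

lemma Ul_diff: "u \<in> Ul T l \<Longrightarrow> v \<in> Ul T l \<Longrightarrow> u - v \<in> Ul T l"
  using Ul_add[of u l "(-1) *\<^sub>R v"] Ul_scale[of v l "-1"] by simp

lemma Ul_sum: "finite A \<Longrightarrow> (\<And>i. i \<in> A \<Longrightarrow> g i \<in> Ul T l) \<Longrightarrow> (\<Sum>i\<in>A. g i) \<in> Ul T l"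
  by (induction A rule: finite_induct) (auto intro: Ul_add Ul_zero)

lemma norm_l_Suc: "norm_l T (Suc l) u = norm u + norm_l T l (gen T u)"
  unfolding norm_l_def sum.atMost_Suc_shift by (simp add: funpow_Suc_right del: funpow.simps)

lemma norm_l_nonneg: "norm_l T l u \<ge> 0"
  unfolding norm_l_def by (rule sum_nonneg) auto

lemma norm_le_norm_l: "norm u \<le> norm_l T l u"
  by (cases l) (auto simp: norm_l_Suc norm_l_nonneg)

lemma norm_l_le_Suc: "norm_l T l u \<le> norm_l T (Suc l) u"
  unfolding norm_l_def by (simp add: sum.atMost_Suc)

lemma norm_l_add: "u \<in> Ul T l \<Longrightarrow> v \<in> Ul T l \<Longrightarrow> norm_l T l (u + v) \<le> norm_l T l u + norm_l T l v"
proof (induction l arbitrary: u v)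
  case 0 then show ?case by (simp add: norm_triangle_ineq)
next
  case (Suc l)
  have u: "u \<in> Ul T (Suc 0)" "gen T u \<in> Ul T l" using Suc.prems(1) Ul_Suc_iff by blast+
  have v: "v \<in> Ul T (Suc 0)" "gen T v \<in> Ul T l" using Suc.prems(2) Ul_Suc_iff by blast+
  have "norm_l T l (gen T (u + v)) \<le> norm_l T l (gen T u) + norm_l T l (gen T v)"
    using gen_add[OF u(1) v(1)] Suc.IH[OF u(2) v(2)] by simp
  then show ?case unfolding norm_l_Suc using norm_triangle_ineq[of u v] by linarith
qed

lemma norm_l_scale: "u \<in> Ul T l \<Longrightarrow> norm_l T l (c *\<^sub>R u) = \<bar>c\<bar> * norm_l T l u"
proof (induction l arbitrary: u)
  case (Suc l)
  then have "u \<in> Ul T (Suc 0)" "gen T u \<in> Ul T l" using Ul_Suc_iff by blast+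
  then show ?case unfolding norm_l_Suc using gen_scale Suc.IH by (simp add: algebra_simps)
qed simp

lemma norm_l_diff: "u \<in> Ul T l \<Longrightarrow> v \<in> Ul T l \<Longrightarrow> norm_l T l (u - v) \<le> norm_l T l u + norm_l T l v"
  using norm_l_add[of u l "(-1) *\<^sub>R v"] Ul_scale[of v l "-1"] norm_l_scale[of v l "-1"] by auto

lemma norm_l_sum:
  "finite A \<Longrightarrow> (\<And>i. i \<in> A \<Longrightarrow> g i \<in> Ul T l) \<Longrightarrow> norm_l T l (\<Sum>i\<in>A. g i) \<le> (\<Sum>i\<in>A. norm_l T l (g i))"
proof (induction A rule: finite_induct)
  case empty then show ?case using norm_l_scale[OF Ul_zero, of l 0] by simp
next
  case (insert x F)
  have "norm_l T l (g x + (\<Sum>i\<in>F. g i)) \<le> norm_l T l (g x) + norm_l T l (\<Sum>i\<in>F. g i)"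
    using insert by (intro norm_l_add Ul_sum) auto
  then show ?case using insert by simp
qed

lemma prod_norm_l_le_Suc: "(\<Prod>v\<leftarrow>vs. norm_l T l v) \<le> (\<Prod>v\<leftarrow>vs. norm_l T (Suc l) v)"
  by (rule prod_list_mono) (auto simp: list_all2_conv_all_nth norm_l_nonneg norm_l_le_Suc)

lemma prod_norm_l_update_gen_le:
  "(\<Prod>v\<leftarrow>vs[i := gen T (vs ! i)]. norm_l T l v) \<le> (\<Prod>v\<leftarrow>vs. norm_l T (Suc l) v)"
proof -
  have "norm_l T l (vs[i := gen T (vs ! i)] ! k) \<le> norm_l T (Suc l) (vs ! k)" if "k < length vs" for k
  proof (cases "k = i")
    case True
    then show ?thesis using that by (simp add: norm_l_Suc)
  next
    case False
    then show ?thesis using norm_l_le_Suc by simp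
  qed
  then show ?thesis by (intro prod_list_mono) (auto simp: list_all2_conv_all_nth norm_l_nonneg)
qed

text \<open>Conjugating by the group action maps the tower of \<open>(s, u) \<mapsto> T s (F (T (-s) u))\<close> to
  a tower of the same map, so uniqueness of towers yields the equivariance of the derivatives.\<close>

lemma tower_equivariant:
  fixes Fl :: "'a \<Rightarrow> 'a" and hs :: "(real \<times> 'a) list"
  assumes tw: "Cinf_tower (\<lambda>(s, u). T s (Fl (T (-s) u))) D" and l: "length hs = n"
  shows "D n (s + t, T t w) (map (map_prod id (T t)) hs) = T t (D n (s, w) hs)"
proof -
  let ?G = "\<lambda>(s, u). T s (Fl (T (-s) u))"
  let ?P = "map_prod id (T t)"
  have P: "bounded_linear ?P"
    using bounded_linear_Pair[OF bounded_linear_fst bounded_linear_compose[OF T_bounded_linear bounded_linear_snd]]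
    by (simp add: map_prod_def case_prod_beta')
  have "(\<lambda>x. T (-t) (?G ((t, 0) + ?P x))) = ?G"
  proof
    fix x :: "real \<times> 'a"
    show "T (-t) (?G ((t, 0) + ?P x)) = ?G x" by (cases x) (simp add: T_T)
  qed
  with Cinf_tower_compose_affine[OF tw T_bounded_linear P, of "-t" "(t, 0)"]
  have "Cinf_tower ?G (\<lambda>n x hs. T (-t) (D n ((t, 0) + ?P x) (map ?P hs)))"
    by simp
  from tower_unique[OF tw this l, of "(s, w)"] show ?thesis
    by (simp add: add.commute)
qed

end

lemma (in strongly_continuous_group) tendsto_orbit: "((\<lambda>h. (h, T h u)) \<longlongrightarrow> (0, u)) (at 0)"
  using tendsto_Pair[OF tendsto_ident_at tendsto_T[of u 0]] by simp

section \<open>Derivatives of the equivariant tower along the group orbit\<close>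

locale equivariant_tower = strongly_continuous_group T for T :: "real \<Rightarrow> 'a::banach \<Rightarrow> 'a" +
  fixes Fl :: "'a \<Rightarrow> 'a" and D :: "nat \<Rightarrow> real \<times> 'a \<Rightarrow> (real \<times> 'a) list \<Rightarrow> 'a"
  assumes tower: "Cinf_tower (\<lambda>(s, u). T s (Fl (T (-s) u))) D"
begin

lemma T_pd:
  assumes "length vs = j"
  shows "T s (pd D k j 0 u vs) = D (k + j) (s, T s u) (replicate k (1, 0) @ map (\<lambda>v. (0, T s v)) vs)"
  using tower_equivariant[OF tower, of "replicate k (1, 0) @ map (\<lambda>v. (0, v)) vs" "k + j" 0 s u] assms
  unfolding pd_def by (simp add: comp_def)

lemma tower_head_pd:
  assumes "length vs = j"
  shows "D (Suc (k + j)) p ((r, w) # replicate k (1, 0) @ map (\<lambda>v. (0, v)) vs)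
    = r *\<^sub>R pd D (Suc k) j (fst p) (snd p) vs + pd D k (Suc j) (fst p) (snd p) (w # vs)"
proof -
  let ?hs = "replicate k (1, 0) @ map (\<lambda>v. (0::real, v)) vs"
  have l: "length ?hs = k + j" using assms by simp
  have "(r, w) = r *\<^sub>R (1::real, 0::'a) + (0, w)" by simp
  then have "D (Suc (k + j)) p ((r, w) # ?hs) = r *\<^sub>R D (Suc (k + j)) p ((1, 0) # ?hs) + D (Suc (k + j)) p ((0, w) # ?hs)"
    using tower_head_add[OF tower l, of p "r *\<^sub>R (1, 0)" "(0, w)"] tower_head_scale[OF tower l, of p r "(1, 0)"]
    by simp
  moreover have "D (Suc (k + j)) p ((0, w) # ?hs) = D (Suc (k + j)) p (replicate k (1, 0) @ (0, w) # map (\<lambda>v. (0, v)) vs)"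
    using tower_move_past_replicate[OF tower] l by simp
  ultimately show ?thesis unfolding pd_def by simp
qed

text \<open>Differentiating \<open>T s (\<partial>\<^sub>s\<^sup>k \<partial>\<^sub>u\<^sup>j F(u\<^sub>0)[vs]) = \<partial>\<^sub>s\<^sup>k \<partial>\<^sub>u\<^sup>j F(s, T s u\<^sub>0)[T s vs]\<close> at \<open>s = 0\<close>
  expresses \<open>A\<close> applied to a derivative of \<open>F\<close> through derivatives of one order higher.\<close>

lemma gen_pd:
  assumes u: "u \<in> Ul T (Suc 0)" and vs: "set vs \<subseteq> Ul T (Suc 0)" "length vs = j"
  shows "pd D k j 0 u vs \<in> Ul T (Suc 0) \<and> gen T (pd D k j 0 u vs) =
     pd D (Suc k) j 0 u vs + pd D k (Suc j) 0 u (gen T u # vs) + (\<Sum>i<j. pd D k j 0 u (vs[i := gen T (vs ! i)]))"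
proof -
  define hs where "hs s = replicate k ((1::real), (0::'a)) @ map (\<lambda>v. (0, T s v)) vs" for s
  define hs' where "hs' = replicate k ((0::real), (0::'a)) @ map (\<lambda>v. (0, gen T v)) vs"
  have lhs: "length (hs s) = k + j" for s unfolding hs_def using vs by simp
  have lhs': "length hs' = k + j" unfolding hs'_def using vs by simp
  have hs0: "hs 0 = replicate k (1, 0) @ map (\<lambda>v. (0, v)) vs" unfolding hs_def by simp
  have dy: "((\<lambda>s. (s, T s u)) has_vector_derivative (1, gen T u)) (at 0)"
    by (intro has_vector_derivative_Pair has_vector_derivative_id has_vector_derivative_gen u)
  have dhs: "((\<lambda>s. hs s ! i) has_vector_derivative hs' ! i) (at 0)" if "i < k + j" for i
  proof (cases "i < k")
    case True
    then show ?thesis unfolding hs_def hs'_def by (simp add: nth_append zero_prod_def[symmetric])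
  next
    case False
    with that vs have "i - k < j" by simp
    with vs have "vs ! (i - k) \<in> Ul T (Suc 0)" using nth_mem by blast
    then have "((\<lambda>s. (0::real, T s (vs ! (i - k)))) has_vector_derivative (0, gen T (vs ! (i - k)))) (at 0)"
      by (intro has_vector_derivative_Pair has_vector_derivative_const has_vector_derivative_gen)
    then show ?thesis unfolding hs_def hs'_def using False vs \<open>i - k < j\<close> by (simp add: nth_append)
  qed
  have "((\<lambda>s. T s (pd D k j 0 u vs)) has_vector_derivative
     (D (Suc (k + j)) (0, u) ((1, gen T u) # hs 0) + (\<Sum>i<k + j. D (k + j) (0, u) ((hs 0)[i := hs' ! i])))) (at 0)"
    using has_vector_derivative_tower_chain[OF tower lhs lhs' dy dhs] T_pd[OF vs(2)]
    unfolding hs_def by simp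
  moreover have "D (Suc (k + j)) (0, u) ((1, gen T u) # hs 0) = pd D (Suc k) j 0 u vs + pd D k (Suc j) 0 u (gen T u # vs)"
    unfolding hs0 using tower_head_pd[OF vs(2), of k "(0, u)" 1 "gen T u"] by simp
  moreover have "(\<Sum>i<k + j. D (k + j) (0, u) ((hs 0)[i := hs' ! i])) = (\<Sum>i<j. pd D k j 0 u (vs[i := gen T (vs ! i)]))"
  proof -
    have "D (k + j) (0, u) ((hs 0)[i := hs' ! i]) = 0" if "i < k" for i
      using that lhs by (intro mlin_bounded_eq_0[OF tower_mlin[OF tower], of _ _ i])
        (auto simp: hs'_def nth_append zero_prod_def)
    moreover have "D (k + j) (0, u) ((hs 0)[k + i := hs' ! (k + i)]) = pd D k j 0 u (vs[i := gen T (vs ! i)])"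
      if "i < j" for i
      unfolding pd_def hs0 hs'_def using that vs by (simp add: nth_append list_update_append map_update)
    ultimately show ?thesis unfolding sum_lessThan_add by simp
  qed
  ultimately show ?thesis using gen_eqI by auto
qed

lemma bounded_linear_pd_0_1: "bounded_linear (\<lambda>v. pd D 0 1 s u [v])"
proof -
  have "bounded_linear (\<lambda>v::'a. (0::real, v))"
    by (intro bounded_linear_Pair bounded_linear_zero bounded_linear_ident)
  from bounded_linear_compose[OF bounded_linear_tower_head[OF tower, of "[]" 0 "(s, u)"] this]
  show ?thesis unfolding pd_def by simp
qed

lemma pd_0_1_diff: "pd D 0 1 s u [v - w] = pd D 0 1 s u [v] - pd D 0 1 s u [w]"
  using linear_diff[OF bounded_linear.linear[OF bounded_linear_pd_0_1]] .

lemma pd_0_1_scale: "pd D 0 1 s u [c *\<^sub>R v] = c *\<^sub>R pd D 0 1 s u [v]"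
  using linear_scale[OF bounded_linear.linear[OF bounded_linear_pd_0_1]] .

lemma pd_0_1_orbit_close:
  obtains \<rho> where "\<And>h. \<rho> h \<ge> 0" "(\<rho> \<longlongrightarrow> 0) (at 0)"
    "\<forall>\<^sub>F h in at 0. \<forall>w. norm (pd D 0 1 0 u [w] - pd D 0 1 h (T h u) [w]) \<le> \<rho> h * norm w"
proof -
  obtain C d where C: "C \<ge> 0" "d > 0" "\<And>p hs. norm (p - (0, u)) < d \<Longrightarrow> length hs = Suc 0 \<Longrightarrow>
     norm (D (Suc 0) p hs - D (Suc 0) (0, u) hs) \<le> C * norm (p - (0, u)) * (\<Prod>h\<leftarrow>hs. norm h)"
    using tower_local_lipschitz[OF tower, of "(0, u)" "Suc 0"] by blast
  show ?thesis
  proof (rule that)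
    show "C * norm ((h, T h u) - (0, u)) \<ge> 0" for h using C(1) by simp
    have "((\<lambda>h. C * norm ((h, T h u) - (0, u))) \<longlongrightarrow> C * norm ((0::real, u) - (0, u))) (at 0)"
      by (intro tendsto_intros tendsto_orbit)
    then show "((\<lambda>h. C * norm ((h, T h u) - (0, u))) \<longlongrightarrow> 0) (at 0)" by simp
    have "\<forall>\<^sub>F h in at 0. dist (h, T h u) (0, u) < d"
      using tendsto_orbit[of u] C(2) unfolding tendsto_iff by blast
    then show "\<forall>\<^sub>F h in at 0. \<forall>w. norm (pd D 0 1 0 u [w] - pd D 0 1 h (T h u) [w])
        \<le> C * norm ((h, T h u) - (0, u)) * norm w"
    proof eventually_elim
      case (elim h)
      show ?case
      proof
        fix w
        have "norm (D (Suc 0) (h, T h u) [(0, w)] - D (Suc 0) (0, u) [(0, w)])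
            \<le> C * norm ((h, T h u) - (0, u)) * norm (0::real, w)"
          using C(3)[of "(h, T h u)" "[(0, w)]"] elim by (simp add: dist_norm)
        then show "norm (pd D 0 1 0 u [w] - pd D 0 1 h (T h u) [w]) \<le> C * norm ((h, T h u) - (0, u)) * norm w"
          by (simp add: pd_def norm_minus_commute norm_Pair)
      qed
    qed
  qed
qed

lemma has_vector_derivative_pd_0_1_orbit:
  assumes "u0 \<in> Ul T (Suc 0)"
  shows "((\<lambda>h. pd D 0 1 h (T h u0) [u]) has_vector_derivative
    pd D 1 1 0 u0 [u] + pd D 0 2 0 u0 [gen T u0, u]) (at 0)"
proof -
  have "((\<lambda>h. (h, T h u0)) has_vector_derivative (1, gen T u0)) (at 0)"
    by (intro has_vector_derivative_Pair has_vector_derivative_id has_vector_derivative_gen assms)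
  from has_vector_derivative_tower_chain[OF tower _ _ this, where hs = "\<lambda>_. [(0, u)]" and hs' = "[0]"]
  have "((\<lambda>h. pd D 0 1 h (T h u0) [u]) has_vector_derivative D 2 (0, u0) [(1, gen T u0), (0, u)] + D 1 (0, u0) [0]) (at 0)"
    unfolding pd_def by (simp add: numeral_2_eq_2)
  moreover have "D 1 (0, u0) [0] = 0" by (rule mlin_bounded_eq_0[OF tower_mlin[OF tower], of _ _ 0]) auto
  moreover have "D 2 (0, u0) [(1, gen T u0), (0, u)] = pd D 1 1 0 u0 [u] + pd D 0 2 0 u0 [gen T u0, u]"
    using tower_head_pd[of "[u]" 1 0 "(0, u0)" 1 "gen T u0"] by (simp add: numeral_2_eq_2)
  ultimately show ?thesis by simp
qed

text \<open>In the next two lemmas the difference quotients of \<open>s \<mapsto> T s u\<close> at \<open>0\<close> converge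
  because, after applying \<open>\<partial>\<^sub>uF(u\<^sub>0)\<close>, they satisfy an identity along the orbit whose error
  is absorbed by the lower bound for \<open>\<partial>\<^sub>uF(u\<^sub>0)\<close>.\<close>

lemma Ul1_of_root:
  assumes root: "Fl u = 0" and c0: "c0 > 0" "\<And>v. c0 * norm v \<le> norm (pd D 0 1 0 u [v])"
    and surj: "\<And>w. \<exists>v. pd D 0 1 0 u [v] = w"
  shows "u \<in> Ul T (Suc 0) \<and> pd D 0 1 0 u [gen T u] = - pd D 1 0 0 u []"
proof -
  define L where "L v = pd D 0 1 0 u [v]" for v
  define m where "m = pd D 1 0 0 u []"
  obtain z where z: "L z = - m" using surj unfolding L_def by blast
  define q where "q h = (T h u - u) /\<^sub>R h" for h
  define r where "r h = norm (D 0 (h, T h u) [] - D 0 (0, u) [] - D (Suc 0) (0, u) [(h, T h u) - (0, u)])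
      / norm ((h, T h u) - (0, u))" for h
  have ev: "\<forall>\<^sub>F h::real in at 0. h \<noteq> 0" by (simp add: eventually_at_filter)
  have r: "(r \<longlongrightarrow> 0) (at 0)"
    unfolding r_def using ev
    by (intro tendsto_tower_remainder_ratio[OF tower] tendsto_orbit) (auto elim: eventually_mono)
  have "(q \<longlongrightarrow> z) (at 0)"
  proof (rule tendsto_absorbing_bound[OF c0(1) _ tendsto_mult_left_zero[OF r] r])
    show "\<forall>\<^sub>F h in at 0. c0 * norm (q h - z) \<le> r h * (1 + norm z) + r h * norm (q h - z)"
      using ev
    proof eventually_elim
      case (elim h)
      define \<Delta> where "\<Delta> = T h u - u"
      have r0: "r h \<ge> 0" unfolding r_def by simp
      have "D 0 (s, T s u) [] = 0" for s using tower_0[OF tower] root by simp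
      from this[of h] this[of 0] have D0: "D 0 (h, T h u) [] = 0" "D 0 (0, u) [] = 0" by simp_all
      have D1: "D (Suc 0) (0, u) [(h, \<Delta>)] = h *\<^sub>R m + L \<Delta>"
        using tower_head_pd[of "[]" 0 0 "(0, u)" h \<Delta>] unfolding L_def m_def by simp
      have diff: "(h, T h u) - (0, u) = (h, \<Delta>)" unfolding \<Delta>_def by simp
      have rem: "D 0 (h, T h u) [] - D 0 (0, u) [] - D (Suc 0) (0, u) [(h, \<Delta>)] = - (h *\<^sub>R m + L \<Delta>)"
        unfolding D0 D1 by simp
      have "norm (h *\<^sub>R m + L \<Delta>) = r h * norm (h, \<Delta>)"
        unfolding r_def diff rem norm_minus_cancel using elim by (simp add: zero_prod_def)
      also have "\<dots> \<le> r h * (\<bar>h\<bar> + norm \<Delta>)" using norm_Pair_le[of h \<Delta>] r0 by (intro mult_left_mono) auto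
      finally have "norm (h *\<^sub>R m + L \<Delta>) / \<bar>h\<bar> \<le> r h * (\<bar>h\<bar> + norm \<Delta>) / \<bar>h\<bar>"
        by (rule divide_right_mono) simp
      also have "\<dots> = r h * (1 + norm (q h))"
      proof -
        have "norm (q h) = norm \<Delta> / \<bar>h\<bar>" unfolding q_def \<Delta>_def by (simp add: divide_inverse_commute)
        then show ?thesis using elim by (simp add: field_simps)
      qed
      finally have "norm (h *\<^sub>R m + L \<Delta>) / \<bar>h\<bar> \<le> r h * (1 + norm (q h))" .
      moreover have "L (q h - z) = (h *\<^sub>R m + L \<Delta>) /\<^sub>R h"
      proof -
        have q\<Delta>: "q h = inverse h *\<^sub>R \<Delta>" unfolding q_def \<Delta>_def by simp
        have "L (q h - z) = inverse h *\<^sub>R L \<Delta> + m"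
          using z unfolding L_def q\<Delta> pd_0_1_diff pd_0_1_scale by simp
        then show ?thesis using elim by (simp add: scaleR_add_right)
      qed
      ultimately have "norm (L (q h - z)) \<le> r h * (1 + norm (q h))"
        by (simp add: divide_inverse_commute)
      also have "\<dots> \<le> r h * (1 + norm z) + r h * norm (q h - z)"
        using mult_left_mono[OF norm_triangle_sub[of "q h" z] r0] by (simp add: algebra_simps)
      finally show ?case using c0(2)[of "q h - z"] unfolding L_def by linarith
    qed
  qed
  then have "((\<lambda>h. T h u) has_vector_derivative z) (at 0)"
    unfolding has_vector_derivative_iff_quotient q_def by simp
  then show ?thesis using gen_eqI z unfolding L_def m_def by auto
qed

lemma Ul1_of_preimage:
  assumes u0: "u0 \<in> Ul T (Suc 0)" and c0: "c0 > 0" "\<And>v. c0 * norm v \<le> norm (pd D 0 1 0 u0 [v])"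
    and surj: "\<And>w. \<exists>v. pd D 0 1 0 u0 [v] = w"
    and f: "f \<in> Ul T (Suc 0)" "pd D 0 1 0 u0 [u] = f"
  shows "u \<in> Ul T (Suc 0) \<and>
    pd D 0 1 0 u0 [gen T u] = gen T f - pd D 1 1 0 u0 [u] - pd D 0 2 0 u0 [gen T u0, u]"
proof -
  define \<Lambda> where "\<Lambda> h v = pd D 0 1 h (T h u0) [v]" for h v
  define \<Lambda>' where "\<Lambda>' = pd D 1 1 0 u0 [u] + pd D 0 2 0 u0 [gen T u0, u]"
  have d\<Lambda>: "((\<lambda>h. \<Lambda> h u) has_vector_derivative \<Lambda>') (at 0)"
    unfolding \<Lambda>_def \<Lambda>'_def by (rule has_vector_derivative_pd_0_1_orbit[OF u0])
  define yv where "yv = gen T f - \<Lambda>'"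
  obtain z where z: "pd D 0 1 0 u0 [z] = yv" using surj by blast
  define q where "q h = (T h u - u) /\<^sub>R h" for h
  define yh where "yh h = (T h f - f) /\<^sub>R h - (\<Lambda> h u - \<Lambda> 0 u) /\<^sub>R h" for h
  have yh: "(yh \<longlongrightarrow> yv) (at 0)"
    using has_vector_derivative_gen[OF f(1)] d\<Lambda> unfolding yh_def yv_def has_vector_derivative_iff_quotient
    by (intro tendsto_diff) simp_all
  have key: "\<Lambda> h (q h) = yh h" if "h \<noteq> 0" for h
  proof -
    have "\<Lambda> h (T h u) = T h f" using T_pd[where vs = "[u]" and k = 0 and s = h and u = u0] f(2) unfolding \<Lambda>_def pd_def by simp
    moreover have "\<Lambda> 0 u = f" using f(2) unfolding \<Lambda>_def by simp
    moreover have "\<Lambda> h (q h) = (\<Lambda> h (T h u) - \<Lambda> h u) /\<^sub>R h"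
      unfolding q_def \<Lambda>_def pd_0_1_scale pd_0_1_diff ..
    ultimately show ?thesis unfolding yh_def by (simp add: scaleR_diff_right)
  qed
  obtain \<rho> where \<rho>: "\<And>h. \<rho> h \<ge> 0" "(\<rho> \<longlongrightarrow> 0) (at 0)"
    "\<forall>\<^sub>F h in at 0. \<forall>w. norm (pd D 0 1 0 u0 [w] - pd D 0 1 h (T h u0) [w]) \<le> \<rho> h * norm w"
    using pd_0_1_orbit_close by blast
  have "(q \<longlongrightarrow> z) (at 0)"
  proof (rule tendsto_absorbing_bound[OF c0(1) _ _ \<rho>(2)])
    show "((\<lambda>h. \<rho> h * norm z + norm (yh h - yv)) \<longlongrightarrow> 0) (at 0)"
      using tendsto_mult_left_zero[OF \<rho>(2)] tendsto_norm_zero[OF yh[THEN LIM_zero]] by (rule tendsto_add_zero)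
    have ev: "\<forall>\<^sub>F h::real in at 0. h \<noteq> 0" by (simp add: eventually_at_filter)
    show "\<forall>\<^sub>F h in at 0. c0 * norm (q h - z) \<le> \<rho> h * norm z + norm (yh h - yv) + \<rho> h * norm (q h - z)"
      using \<rho>(3) ev
    proof eventually_elim
      case (elim h)
      have "pd D 0 1 0 u0 [q h - z] = pd D 0 1 0 u0 [q h] - pd D 0 1 0 u0 [z]"
        by (rule pd_0_1_diff)
      then have "pd D 0 1 0 u0 [q h - z] = (pd D 0 1 0 u0 [q h] - \<Lambda> h (q h)) + (yh h - yv)"
        using key[OF elim(2)] z by simp
      then have "norm (pd D 0 1 0 u0 [q h - z]) \<le> norm (pd D 0 1 0 u0 [q h] - \<Lambda> h (q h)) + norm (yh h - yv)"
        by (simp only: norm_triangle_ineq)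
      also have "norm (pd D 0 1 0 u0 [q h] - \<Lambda> h (q h)) \<le> \<rho> h * norm (q h)"
        using elim(1) unfolding \<Lambda>_def by blast
      also have "\<rho> h * norm (q h) \<le> \<rho> h * norm z + \<rho> h * norm (q h - z)"
        using mult_left_mono[OF norm_triangle_sub[of "q h" z] \<rho>(1)] by (simp add: distrib_left)
      finally show ?case using c0(2)[of "q h - z"] by linarith
    qed
  qed
  then have "((\<lambda>h. T h u) has_vector_derivative z) (at 0)"
    unfolding has_vector_derivative_iff_quotient q_def by simp
  then show ?thesis using gen_eqI z unfolding yv_def \<Lambda>'_def by auto
qed

end

section \<open>Regularity of the inverse of the linearization\<close>

lemma bounded_below_inj:
  assumes "linear L" "c > 0" "\<And>u. c * norm u \<le> norm (L u)"
  shows "inj L"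
proof (rule injI)
  fix a b assume "L a = L b"
  then have "L (a - b) = 0" using linear_diff[OF assms(1)] by simp
  then show "a = b" using assms(2) assms(3)[of "a - b"] by (simp add: mult_le_0_iff)
qed

lemma fredholm_index0_bounded_below_surj:
  assumes "fredholm_index0 L" "c > 0" "\<And>u. c * norm u \<le> norm (L u)"
  shows "surj L"
proof -
  obtain B C where BC: "independent B" "span B = {x. L x = 0}" "finite C" "card C = card B"
    "{x + y |x y. x \<in> range L \<and> y \<in> span C} = UNIV"
    using assms(1) unfolding fredholm_index0_def by blast
  have "inj L"
    using assms bounded_below_inj bounded_linear.linear unfolding fredholm_index0_def by blast
  then have "L x = 0 \<Longrightarrow> x = 0" for x
    using assms(1) linear_0[OF bounded_linear.linear] unfolding fredholm_index0_def inj_def by metis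
  then have "B \<subseteq> {0}" using span_superset[of B] BC(2) by auto
  moreover have "0 \<notin> B" using BC(1) dependent_zero by blast
  ultimately have "B = {}" by auto
  then have "C = {}" using BC(3,4) by simp
  then show ?thesis using BC(5) by auto
qed

definition Ul_bounded_by :: "(real \<Rightarrow> 'a::banach \<Rightarrow> 'a) \<Rightarrow> nat \<Rightarrow> nat \<Rightarrow> ('a list \<Rightarrow> 'a) \<Rightarrow> real \<Rightarrow> bool"
  where "Ul_bounded_by T l j M C \<longleftrightarrow> (\<forall>vs. length vs = j \<and> set vs \<subseteq> Ul T l \<longrightarrow>
      M vs \<in> Ul T l \<and> norm_l T l (M vs) \<le> C * (\<Prod>v\<leftarrow>vs. norm_l T l v))"

definition Ul_bounded :: "(real \<Rightarrow> 'a::banach \<Rightarrow> 'a) \<Rightarrow> nat \<Rightarrow> real set \<Rightarrow> (real \<Rightarrow> 'a list \<Rightarrow> 'a) \<Rightarrow> nat \<Rightarrow> bool"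
  where "Ul_bounded T l I M j \<longleftrightarrow> (\<exists>C>0. \<forall>lam\<in>I. Ul_bounded_by T l j (M lam) C)"

lemma Ul_bounded_by_unary_iff:
  "Ul_bounded_by T l 1 M C \<longleftrightarrow> (\<forall>f\<in>Ul T l. M [f] \<in> Ul T l \<and> norm_l T l (M [f]) \<le> C * norm_l T l f)"
  unfolding Ul_bounded_by_def by (fastforce simp: length_Suc_conv)

lemma Ul_bounded_by_0_iff:
  "Ul_bounded_by T 0 j M C \<longleftrightarrow> (\<forall>vs. length vs = j \<longrightarrow> norm (M vs) \<le> C * (\<Prod>v\<leftarrow>vs. norm v))"
  unfolding Ul_bounded_by_def by simp

locale regularity_setting = strongly_continuous_group T for T :: "real \<Rightarrow> 'a::banach \<Rightarrow> 'a" +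
  fixes F :: "real \<Rightarrow> 'a \<Rightarrow> 'a" and DF :: "real \<Rightarrow> nat \<Rightarrow> real \<times> 'a \<Rightarrow> (real \<times> 'a) list \<Rightarrow> 'a"
    and I :: "real set" and u0 :: 'a and c0 :: real
  assumes towers: "\<And>lam. lam \<in> I \<Longrightarrow> Cinf_tower (\<lambda>(s, u). T s (F lam (T (-s) u))) (DF lam)"
    and root: "0 \<in> I" "F 0 u0 = 0"
    and c0: "c0 > 0"
    and bounded_below: "\<And>lam v. lam \<in> I \<Longrightarrow> c0 * norm v \<le> norm (pd (DF lam) 0 1 0 u0 [v])"
    and surjective: "\<And>lam. lam \<in> I \<Longrightarrow> surj (\<lambda>v. pd (DF lam) 0 1 0 u0 [v])"
begin

abbreviation dF0 :: "real \<Rightarrow> 'a \<Rightarrow> 'a" where "dF0 lam \<equiv> \<lambda>v. pd (DF lam) 0 1 0 u0 [v]"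

abbreviation pd0 :: "nat \<Rightarrow> nat \<Rightarrow> real \<Rightarrow> 'a list \<Rightarrow> 'a" where "pd0 k j \<equiv> \<lambda>lam. pd (DF lam) k j 0 u0"

abbreviation inv_dF0 :: "real \<Rightarrow> 'a list \<Rightarrow> 'a" where "inv_dF0 \<equiv> \<lambda>lam vs. inv (dF0 lam) (hd vs)"

lemma equivariant_tower: "lam \<in> I \<Longrightarrow> equivariant_tower T (F lam) (DF lam)"
  by (simp add: equivariant_tower_def equivariant_tower_axioms_def strongly_continuous_group_axioms towers)

lemma dF0_inv: "lam \<in> I \<Longrightarrow> dF0 lam (inv (dF0 lam) f) = f"
  using surjective by (rule surj_f_inv_f)

lemma inv_dF0_dF0: "lam \<in> I \<Longrightarrow> inv (dF0 lam) (dF0 lam v) = v"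
  using bounded_below_inj[OF bounded_linear.linear[OF equivariant_tower.bounded_linear_pd_0_1[OF equivariant_tower]]
      c0 bounded_below] by (rule inv_f_f)

lemma norm_inv_dF0_le: "lam \<in> I \<Longrightarrow> norm (inv (dF0 lam) f) \<le> norm f / c0"
  using bounded_below[of lam "inv (dF0 lam) f"] dF0_inv[of lam f] c0 by (simp add: field_simps)

lemma Ul_bounded_inv_dF0_0: "Ul_bounded T 0 I inv_dF0 1"
  unfolding Ul_bounded_def Ul_bounded_by_unary_iff using c0 norm_inv_dF0_le
  by (intro exI[of _ "1 / c0"]) (simp add: divide_inverse_commute)

text \<open>\<open>A u\<^sub>0 = -\<partial>\<^sub>uF(0, u\<^sub>0)\<^sup>-\<^sup>1 \<partial>\<^sub>sF(0, u\<^sub>0)\<close> gains one order of regularity from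
  the bounds at order \<open>l\<close>.\<close>

lemma u0_Ul_Suc:
  assumes "Ul_bounded T l I (pd0 1 0) 0" "Ul_bounded T l I inv_dF0 1"
  shows "u0 \<in> Ul T (Suc l)"
proof -
  interpret equivariant_tower T "F 0" "DF 0" using equivariant_tower[OF root(1)] .
  have "\<exists>v. dF0 0 v = w" for w using surjective[OF root(1)] unfolding surj_def by metis
  then have u01: "u0 \<in> Ul T (Suc 0)" and eq: "dF0 0 (gen T u0) = - pd (DF 0) 1 0 0 u0 []"
    using Ul1_of_root[OF root(2) c0 bounded_below[OF root(1)]] by blast+
  have "pd (DF 0) 1 0 0 u0 [] \<in> Ul T l"
    using assms(1) root(1) unfolding Ul_bounded_def Ul_bounded_by_def by auto
  then have "- pd (DF 0) 1 0 0 u0 [] \<in> Ul T l" using Ul_scale[of _ l "-1"] by simp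
  then have "inv_dF0 0 [- pd (DF 0) 1 0 0 u0 []] \<in> Ul T l"
    using assms(2) root(1) unfolding Ul_bounded_def Ul_bounded_by_unary_iff by blast
  then have "gen T u0 \<in> Ul T l" using inv_dF0_dF0[OF root(1), of "gen T u0"] eq by simp
  then show ?thesis using u01 Ul_Suc_iff by blast
qed

lemma pd0_Ul_bounded_by_Suc:
  assumes lam: "lam \<in> I" and u0: "u0 \<in> Ul T (Suc l)"
    and C1: "Ul_bounded_by T l j (pd0 (Suc k) j lam) C1" "C1 \<ge> 0"
    and C2: "Ul_bounded_by T l (Suc j) (pd0 k (Suc j) lam) C2" "C2 \<ge> 0"
    and C3: "Ul_bounded_by T l j (pd0 k j lam) C3" "C3 \<ge> 0"
  shows "Ul_bounded_by T (Suc l) j (pd0 k j lam) (C3 + C1 + C2 * norm_l T l (gen T u0) + real j * C3)"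
  unfolding Ul_bounded_by_def
proof (intro allI impI)
  interpret equivariant_tower T "F lam" "DF lam" using equivariant_tower[OF lam] .
  fix vs assume vs: "length vs = j \<and> set vs \<subseteq> Ul T (Suc l)"
  have u0': "u0 \<in> Ul T (Suc 0)" "gen T u0 \<in> Ul T l" using u0 Ul_Suc_iff by blast+
  have vs1: "set vs \<subseteq> Ul T (Suc 0)" and vsl: "set vs \<subseteq> Ul T l"
    using vs Ul_Suc_iff Ul_Suc_subset by blast+
  define a where "a = norm_l T l (gen T u0)"
  define P0 where "P0 = (\<Prod>v\<leftarrow>vs. norm_l T l v)"
  define P1 where "P1 = (\<Prod>v\<leftarrow>vs. norm_l T (Suc l) v)"
  have P: "P0 \<le> P1" unfolding P0_def P1_def by (rule prod_norm_l_le_Suc)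
  define Mi where "Mi i = pd0 k j lam (vs[i := gen T (vs ! i)])" for i
  have M: "pd0 k j lam vs \<in> Ul T (Suc 0)"
    and gen: "gen T (pd0 k j lam vs) = pd0 (Suc k) j lam vs + pd0 k (Suc j) lam (gen T u0 # vs) + (\<Sum>i<j. Mi i)"
    using gen_pd[OF u0'(1) vs1] vs unfolding Mi_def by blast+
  have M0: "norm_l T l (pd0 k j lam vs) \<le> C3 * P0"
    using C3(1) vs vsl unfolding Ul_bounded_by_def P0_def by blast
  have M1: "pd0 (Suc k) j lam vs \<in> Ul T l" "norm_l T l (pd0 (Suc k) j lam vs) \<le> C1 * P0"
    using C1(1) vs vsl unfolding Ul_bounded_by_def P0_def by blast+
  have M2: "pd0 k (Suc j) lam (gen T u0 # vs) \<in> Ul T l" "norm_l T l (pd0 k (Suc j) lam (gen T u0 # vs)) \<le> C2 * (a * P0)"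
    using C2(1)[unfolded Ul_bounded_by_def, rule_format, of "gen T u0 # vs"] vs vsl u0'(2)
    unfolding P0_def a_def by auto
  have Mi: "Mi i \<in> Ul T l \<and> norm_l T l (Mi i) \<le> C3 * P1" if "i < j" for i
  proof -
    have "set (vs[i := gen T (vs ! i)]) \<subseteq> Ul T l"
      using set_update_subset_insert[of vs i] vsl vs that Ul_Suc_iff nth_mem by blast
    then have "Mi i \<in> Ul T l \<and> norm_l T l (Mi i) \<le> C3 * (\<Prod>v\<leftarrow>vs[i := gen T (vs ! i)]. norm_l T l v)"
      using C3(1) vs unfolding Mi_def Ul_bounded_by_def by simp
    moreover have "C3 * (\<Prod>v\<leftarrow>vs[i := gen T (vs ! i)]. norm_l T l v) \<le> C3 * P1"
      unfolding P1_def using prod_norm_l_update_gen_le C3(2) by (rule mult_left_mono)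
    ultimately show ?thesis by linarith
  qed
  have "gen T (pd0 k j lam vs) \<in> Ul T l"
    unfolding gen using M1 M2 Mi by (intro Ul_add Ul_sum) auto
  then have "pd0 k j lam vs \<in> Ul T (Suc l)" using M Ul_Suc_iff by blast
  moreover have "norm_l T l (gen T (pd0 k j lam vs)) \<le> C1 * P0 + C2 * (a * P0) + (\<Sum>i<j. C3 * P1)"
  proof -
    let ?M1 = "pd0 (Suc k) j lam vs" and ?M2 = "pd0 k (Suc j) lam (gen T u0 # vs)"
    have "norm_l T l (gen T (pd0 k j lam vs)) \<le> norm_l T l (?M1 + ?M2) + norm_l T l (\<Sum>i<j. Mi i)"
      unfolding gen using M1 M2 Mi by (intro norm_l_add Ul_add Ul_sum) auto
    also have "\<dots> \<le> (norm_l T l ?M1 + norm_l T l ?M2) + (\<Sum>i<j. norm_l T l (Mi i))"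
      using M1 M2 Mi by (intro add_mono norm_l_add norm_l_sum) auto
    also have "\<dots> \<le> C1 * P0 + C2 * (a * P0) + (\<Sum>i<j. C3 * P1)"
      using M1 M2 Mi by (intro add_mono sum_mono) auto
    finally show ?thesis .
  qed
  moreover have "norm (pd0 k j lam vs) \<le> C3 * P1"
    using norm_le_norm_l[of _ l] M0 mult_left_mono[OF P C3(2)] by (meson order_trans)
  ultimately have "norm_l T (Suc l) (pd0 k j lam vs) \<le> C3 * P1 + (C1 * P0 + C2 * (a * P0) + real j * (C3 * P1))"
    unfolding norm_l_Suc by simp
  also have "\<dots> \<le> C3 * P1 + (C1 * P1 + C2 * (a * P1) + real j * (C3 * P1))"
    using P C1(2) C2(2) norm_l_nonneg[of l "gen T u0"] unfolding a_def
    by (intro add_mono mult_left_mono order_refl) auto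
  finally show "pd0 k j lam vs \<in> Ul T (Suc l) \<and> norm_l T (Suc l) (pd0 k j lam vs)
      \<le> (C3 + C1 + C2 * norm_l T l (gen T u0) + real j * C3) * (\<Prod>v\<leftarrow>vs. norm_l T (Suc l) v)"
    using \<open>pd0 k j lam vs \<in> Ul T (Suc l)\<close> unfolding P1_def a_def by (simp add: algebra_simps)
qed

lemma Ul_bounded_pd0_Suc:
  assumes u0: "u0 \<in> Ul T (Suc l)" and bounded: "\<And>k j. Ul_bounded T l I (pd0 k j) j"
  shows "Ul_bounded T (Suc l) I (pd0 k j) j"
proof -
  obtain C1 C2 C3 where C: "C1 > 0" "C2 > 0" "C3 > 0"
    and "\<forall>lam\<in>I. Ul_bounded_by T l j (pd0 (Suc k) j lam) C1"
      "\<forall>lam\<in>I. Ul_bounded_by T l (Suc j) (pd0 k (Suc j) lam) C2"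
      "\<forall>lam\<in>I. Ul_bounded_by T l j (pd0 k j lam) C3"
    using bounded[of "Suc k" j] bounded[of k "Suc j"] bounded[of k j] unfolding Ul_bounded_def by blast
  with pd0_Ul_bounded_by_Suc[OF _ u0] norm_l_nonneg[of l "gen T u0"] show ?thesis
    unfolding Ul_bounded_def
    by (intro exI[of _ "C3 + C1 + C2 * norm_l T l (gen T u0) + real j * C3"]) (simp add: add_pos_nonneg)
qed

text \<open>Differentiating \<open>\<partial>\<^sub>uF(u\<^sub>0) u = f\<close> along the orbit gives
  \<open>\<partial>\<^sub>uF(u\<^sub>0) (A u) = A f - \<partial>\<^sub>s\<partial>\<^sub>uF(u\<^sub>0) u - \<partial>\<^sub>u\<^sup>2F(u\<^sub>0)(A u\<^sub>0, u)\<close>, whose right-hand side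
  lies in \<open>U\<^sub>l\<close> by the order-\<open>l\<close> bounds.\<close>

lemma inv_dF0_Ul_bounded_by_Suc:
  assumes lam: "lam \<in> I" and u0: "u0 \<in> Ul T (Suc l)"
    and E1: "Ul_bounded_by T l 1 (pd0 1 1 lam) E1" "E1 \<ge> 0"
    and E2: "Ul_bounded_by T l 2 (pd0 0 2 lam) E2" "E2 \<ge> 0"
    and Ci: "Ul_bounded_by T l 1 (inv_dF0 lam) Ci" "Ci \<ge> 0"
  shows "Ul_bounded_by T (Suc l) 1 (inv_dF0 lam) (1 / c0 + Ci * (1 + (E1 + E2 * norm_l T l (gen T u0)) * Ci))"
  unfolding Ul_bounded_by_unary_iff
proof (intro ballI)
  interpret equivariant_tower T "F lam" "DF lam" using equivariant_tower[OF lam] .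
  fix f assume f: "f \<in> Ul T (Suc l)"
  have u0': "u0 \<in> Ul T (Suc 0)" "gen T u0 \<in> Ul T l" using u0 Ul_Suc_iff by blast+
  define a where "a = norm_l T l (gen T u0)"
  define u where "u = inv (dF0 lam) f"
  define w where "w = gen T f - pd0 1 1 lam [u] - pd0 0 2 lam [gen T u0, u]"
  define N where "N = norm_l T (Suc l) f"
  have f1: "f \<in> Ul T (Suc 0)" "gen T f \<in> Ul T l" "f \<in> Ul T l" using f Ul_Suc_iff Ul_Suc_subset by blast+
  have fN: "norm f \<le> N" "norm_l T l f \<le> N" "norm_l T l (gen T f) \<le> N"
    unfolding N_def using norm_le_norm_l[of f "Suc l"] norm_l_le_Suc[of l f] norm_l_Suc[of l f] norm_l_nonneg[of l f]
    by auto
  have "\<exists>v. dF0 lam v = y" for y using surjective[OF lam] unfolding surj_def by metis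
  then have u1: "u \<in> Ul T (Suc 0)" and "dF0 lam (gen T u) = w"
    using Ul1_of_preimage[OF u0'(1) c0 bounded_below[OF lam] _ f1(1) dF0_inv[OF lam]]
    unfolding u_def w_def by blast+
  then have gen_u: "gen T u = inv_dF0 lam [w]" using inv_dF0_dF0[OF lam, of "gen T u"] by simp
  have "u \<in> Ul T l \<and> norm_l T l u \<le> Ci * norm_l T l f"
    using Ci(1) f1(3) unfolding u_def Ul_bounded_by_unary_iff by simp
  then have ul: "u \<in> Ul T l" "norm_l T l u \<le> Ci * N"
    using mult_left_mono[OF fN(2) Ci(2)] by linarith+
  have h1: "pd0 1 1 lam [u] \<in> Ul T l" "norm_l T l (pd0 1 1 lam [u]) \<le> E1 * norm_l T l u"
    using E1(1) ul unfolding Ul_bounded_by_unary_iff by auto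
  have h2: "pd0 0 2 lam [gen T u0, u] \<in> Ul T l" "norm_l T l (pd0 0 2 lam [gen T u0, u]) \<le> E2 * (a * norm_l T l u)"
    using E2(1)[unfolded Ul_bounded_by_def, rule_format, of "[gen T u0, u]"] ul u0'(2) unfolding a_def by auto
  have wl: "w \<in> Ul T l" unfolding w_def using f1 h1 h2 by (intro Ul_diff) auto
  have "norm_l T l w \<le> norm_l T l (gen T f) + norm_l T l (pd0 1 1 lam [u]) + norm_l T l (pd0 0 2 lam [gen T u0, u])"
    unfolding w_def using f1 h1 h2 by (intro order_trans[OF norm_l_diff] add_mono norm_l_diff Ul_diff) auto
  also have "\<dots> \<le> N + (E1 + E2 * a) * (Ci * N)"
    using fN(3) h1(2) h2(2) mult_left_mono[OF ul(2), of "E1 + E2 * a"] E1(2) E2(2) norm_l_nonneg[of l "gen T u0"]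
    unfolding a_def by (simp add: algebra_simps)
  finally have wN: "norm_l T l w \<le> N + (E1 + E2 * a) * (Ci * N)" .
  have gul: "gen T u \<in> Ul T l" "norm_l T l (gen T u) \<le> Ci * norm_l T l w"
    using Ci(1) wl unfolding gen_u Ul_bounded_by_unary_iff by auto
  have "norm u \<le> N / c0" using norm_inv_dF0_le[OF lam, of f] fN(1) c0 unfolding u_def
    by (meson divide_right_mono less_imp_le order_trans)
  moreover have "norm_l T l (gen T u) \<le> Ci * (N + (E1 + E2 * a) * (Ci * N))"
    using gul(2) mult_left_mono[OF wN Ci(2)] by linarith
  ultimately have "norm_l T (Suc l) u \<le> N / c0 + Ci * (N + (E1 + E2 * a) * (Ci * N))"
    unfolding norm_l_Suc by linarith
  moreover have "u \<in> Ul T (Suc l)" using u1 gul(1) Ul_Suc_iff by blast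
  ultimately show "inv_dF0 lam [f] \<in> Ul T (Suc l) \<and> norm_l T (Suc l) (inv_dF0 lam [f])
      \<le> (1 / c0 + Ci * (1 + (E1 + E2 * norm_l T l (gen T u0)) * Ci)) * norm_l T (Suc l) f"
    unfolding u_def N_def a_def by (simp add: algebra_simps)
qed

lemma Ul_bounded_inv_dF0_Suc:
  assumes u0: "u0 \<in> Ul T (Suc l)" and "Ul_bounded T l I (pd0 1 1) 1" "Ul_bounded T l I (pd0 0 2) 2"
    and "Ul_bounded T l I inv_dF0 1"
  shows "Ul_bounded T (Suc l) I inv_dF0 1"
proof -
  obtain E1 E2 Ci where C: "E1 > 0" "E2 > 0" "Ci > 0"
    and "\<forall>lam\<in>I. Ul_bounded_by T l 1 (pd0 1 1 lam) E1" "\<forall>lam\<in>I. Ul_bounded_by T l 2 (pd0 0 2 lam) E2"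
      "\<forall>lam\<in>I. Ul_bounded_by T l 1 (inv_dF0 lam) Ci"
    using assms(2-4) unfolding Ul_bounded_def by blast
  with inv_dF0_Ul_bounded_by_Suc[OF _ u0] norm_l_nonneg[of l "gen T u0"] show ?thesis
    unfolding Ul_bounded_def
    by (intro exI[of _ "1 / c0 + Ci * (1 + (E1 + E2 * norm_l T l (gen T u0)) * Ci)"])
      (simp add: c0 add_pos_nonneg)
qed

lemma Ul_regularity:
  assumes base: "\<And>k j. Ul_bounded T 0 I (pd0 k j) j"
  shows "u0 \<in> Ul T l \<and> (\<forall>k j. Ul_bounded T l I (pd0 k j) j) \<and> Ul_bounded T l I inv_dF0 1"
proof (induction l)
  case 0
  show ?case using base Ul_bounded_inv_dF0_0 by simp
next
  case (Suc l)
  then have pd: "\<And>k j. Ul_bounded T l I (pd0 k j) j" and inv: "Ul_bounded T l I inv_dF0 1" by blast+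
  have u0: "u0 \<in> Ul T (Suc l)" by (rule u0_Ul_Suc[OF pd inv])
  show ?case using u0 Ul_bounded_pd0_Suc[OF u0 pd] Ul_bounded_inv_dF0_Suc[OF u0 pd pd inv] by blast
qed

end

theorem lemma2p11:
  fixes T :: "real \<Rightarrow> 'a::banach \<Rightarrow> 'a"
    and F :: "real \<Rightarrow> 'a \<Rightarrow> 'a"
    and DF :: "real \<Rightarrow> nat \<Rightarrow> real \<times> 'a \<Rightarrow> (real \<times> 'a) list \<Rightarrow> 'a"
    and \<epsilon>0 :: real and u0 :: 'a
  defines "I \<equiv> {-\<epsilon>0..\<epsilon>0}"
  defines "calF \<equiv> (\<lambda>lam s u. T s (F lam (T (-s) u)))"
  defines "dF \<equiv> (\<lambda>lam u v. pd (DF lam) 0 1 0 u [v])"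
  assumes grp: "sc_group T"
    and eps: "\<epsilon>0 > 0"
    and F0: "F 0 u0 = 0"
    and A1: "\<forall>lam\<in>I. Cinf_tower (\<lambda>(s, u). calF lam s u) (DF lam)"
    and A2: "\<forall>j k l u us. u \<in> Ul T l \<and> length us = j \<and> set us \<subseteq> Ul T l \<longrightarrow>
               Ck_on I l (\<lambda>lam. pd (DF lam) k j 0 u us)"
    and A3: "\<forall>j k l. \<exists>c>0. \<forall>lam\<in>I. \<forall>u us.
               u \<in> Ul T l \<and> norm_l T l (u - u0) \<le> 1 \<and> length us = j \<and> set us \<subseteq> Ul T l \<longrightarrow>
               norm (lderiv I l (\<lambda>mu. pd (DF mu) k j 0 u us) lam)
                 \<le> c * (\<Prod>v\<leftarrow>us. norm_l T l v)"
    and A4: "\<exists>c0>0. \<forall>lam\<in>I. fredholm_index0 (dF lam u0) \<and>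
               (\<forall>u. norm (dF lam u0 u) \<ge> c0 * norm u)"
  shows "\<forall>l. \<exists>cl>0. \<forall>lam\<in>I. \<forall>f\<in>Ul T l.
           inv (dF lam u0) f \<in> Ul T l \<and>
           norm_l T l (inv (dF lam u0) f) \<le> cl * norm_l T l f"
proof -
  obtain c0 where c0: "c0 > 0"
    and A4': "\<And>lam. lam \<in> I \<Longrightarrow> fredholm_index0 (dF lam u0) \<and> (\<forall>u. c0 * norm u \<le> norm (dF lam u0 u))"
    using A4 by blast
  interpret regularity_setting T F DF I u0 c0
  proof
    show "sc_group T" "0 \<in> I" "F 0 u0 = 0" "c0 > 0" using grp eps F0 c0 unfolding I_def by simp_all
    show "Cinf_tower (\<lambda>(s, u). T s (F lam (T (-s) u))) (DF lam)" if "lam \<in> I" for lam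
      using A1 that unfolding calF_def by simp
    show "c0 * norm v \<le> norm (pd (DF lam) 0 1 0 u0 [v])" "surj (\<lambda>v. pd (DF lam) 0 1 0 u0 [v])" if "lam \<in> I" for lam v
      using A4'[OF that] fredholm_index0_bounded_below_surj[OF _ c0] unfolding dF_def by blast+
  qed
  \<comment> \<open>Only the case \<open>l = 0\<close> of (A3) is used, and (A2) not at all: the regularity in \<open>U\<^sub>l\<close>
    is bootstrapped from the group structure.\<close>
  have "Ul_bounded T 0 I (pd0 k j) j" for k j
    using A3[rule_format, where j = j and k = k and l = 0] unfolding Ul_bounded_def Ul_bounded_by_0_iff by (force simp: lderiv_def)
  then have "Ul_bounded T l I inv_dF0 1" for l using Ul_regularity by blast
  then show ?thesis unfolding Ul_bounded_def Ul_bounded_by_unary_iff dF_def by simp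
qed

end
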